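(* Let $(\Theta,d)$ be a totally bounded semimetric space with diameter $\Delta$, and let $X=(X^\theta)_{\theta\in\Theta}$ be a nearly sub-Gaussian random field w.r.t. $d$ on a probability space $(\overline\Omega,\overline{\mathcal F},\overline{\mathrm P})$. If $\mathcal D(\Delta,d)<\infty$, then $X$ admits a separable version, and each separable version of $X$ has $\overline{\mathrm P}$-almost surely bounded and $d$-uniformly continuous paths. Moreover, for any separable version $\widehat X$ of $X$ and every $\overline\theta\in\Theta$ there is a random variable $U^{\overline\theta}$ on $(\overline\Omega,\overline{\mathcal F},\overline{\mathrm P})$ such that $\sup_{\theta\in\Theta}\widehat X^\theta\le U^{\overline\theta}+\widehat X^{\overline\theta}$ $\overline{\mathrm P}$-a.s. and $\mathbb E_{\overline{\mathrm P}}[\exp(pU^{\overline\theta})]<\infty$ for every $p\in(0,\infty)$.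
   Context: A centered stochastic process $(X^\theta)_{\theta\in\Theta}$ is a nearly sub-Gaussian random field w.r.t. $d$ if there is $C\ge1$ such that $\mathbb E[\exp(\lambda(X^\theta-X^\vartheta))]\le C\exp(\lambda^2d(\theta,\vartheta)^2/2)$ for all $\theta,\vartheta\in\Theta$ and $\lambda>0$. $N(\Theta,d;\varepsilon)$ denotes the minimal number of $\varepsilon$-balls w.r.t. $d$ needed to cover $\Theta$, and $\mathcal D(\delta,d)=\int_0^\delta\sqrt{\ln N(\Theta,d;\varepsilon)}\,d\varepsilon$. *)

theory Defs
  imports "HOL-Probability.Probability"
begin

definition semimetric_on :: "'b set \<Rightarrow> ('b \<Rightarrow> 'b \<Rightarrow> real) \<Rightarrow> bool" where
  "semimetric_on \<Theta> d \<longleftrightarrow>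
     (\<forall>s\<in>\<Theta>. \<forall>t\<in>\<Theta>. 0 \<le> d s t \<and> d s t = d t s) \<and> (\<forall>s\<in>\<Theta>. d s s = 0) \<and>
     (\<forall>r\<in>\<Theta>. \<forall>s\<in>\<Theta>. \<forall>t\<in>\<Theta>. d r t \<le> d r s + d s t)"

definition totally_bounded_wrt :: "'b set \<Rightarrow> ('b \<Rightarrow> 'b \<Rightarrow> real) \<Rightarrow> bool" where
  "totally_bounded_wrt \<Theta> d \<longleftrightarrow>
     (\<forall>\<epsilon>>0. \<exists>F. finite F \<and> F \<subseteq> \<Theta> \<and> \<Theta> \<subseteq> (\<Union>c\<in>F. {t. d c t < \<epsilon>}))"

definition diameter_wrt :: "'b set \<Rightarrow> ('b \<Rightarrow> 'b \<Rightarrow> real) \<Rightarrow> real" where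
  "diameter_wrt \<Theta> d = Sup {d s t | s t. s \<in> \<Theta> \<and> t \<in> \<Theta>}"

definition covering_number :: "'b set \<Rightarrow> ('b \<Rightarrow> 'b \<Rightarrow> real) \<Rightarrow> real \<Rightarrow> nat" where
  "covering_number \<Theta> d \<epsilon> =
     (LEAST n. \<exists>F. finite F \<and> card F = n \<and> F \<subseteq> \<Theta> \<and> \<Theta> \<subseteq> (\<Union>c\<in>F. {t. d c t < \<epsilon>}))"

definition dudley_integral :: "'b set \<Rightarrow> ('b \<Rightarrow> 'b \<Rightarrow> real) \<Rightarrow> real \<Rightarrow> ennreal" where
  "dudley_integral \<Theta> d \<delta> =
     (\<integral>\<^sup>+ \<epsilon>. indicator {0<..\<delta>} \<epsilon> * ennreal (sqrt (ln (real (covering_number \<Theta> d \<epsilon>)))) \<partial>lborel)"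

definition nearly_subgaussian ::
  "'a measure \<Rightarrow> 'b set \<Rightarrow> ('b \<Rightarrow> 'b \<Rightarrow> real) \<Rightarrow> ('b \<Rightarrow> 'a \<Rightarrow> real) \<Rightarrow> bool" where
  "nearly_subgaussian M \<Theta> d X \<longleftrightarrow>
     (\<forall>\<theta>\<in>\<Theta>. integrable M (X \<theta>) \<and> integral\<^sup>L M (X \<theta>) = 0) \<and>
     (\<exists>C\<ge>1. \<forall>\<theta>\<in>\<Theta>. \<forall>\<phi>\<in>\<Theta>. \<forall>l>0.
        (\<integral>\<^sup>+ \<omega>. ennreal (exp (l * (X \<theta> \<omega> - X \<phi> \<omega>))) \<partial>M)
          \<le> ennreal (C * exp (l\<^sup>2 * (d \<theta> \<phi>)\<^sup>2 / 2)))"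

definition is_version ::
  "'a measure \<Rightarrow> 'b set \<Rightarrow> ('b \<Rightarrow> 'a \<Rightarrow> real) \<Rightarrow> ('b \<Rightarrow> 'a \<Rightarrow> real) \<Rightarrow> bool" where
  "is_version M \<Theta> X Y \<longleftrightarrow>
     (\<forall>\<theta>\<in>\<Theta>. Y \<theta> \<in> borel_measurable M \<and> (AE \<omega> in M. Y \<theta> \<omega> = X \<theta> \<omega>))"

definition separable_field ::
  "'a measure \<Rightarrow> 'b set \<Rightarrow> ('b \<Rightarrow> 'b \<Rightarrow> real) \<Rightarrow> ('b \<Rightarrow> 'a \<Rightarrow> real) \<Rightarrow> bool" where
  "separable_field M \<Theta> d Y \<longleftrightarrow>
     (\<exists>T N. countable T \<and> T \<subseteq> \<Theta> \<and> N \<in> null_sets M \<and>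
        (\<forall>\<omega>\<in>space M - N. \<forall>\<theta>\<in>\<Theta>. \<forall>\<epsilon>>0.
           Y \<theta> \<omega> \<in> closure {Y t \<omega> | t. t \<in> T \<and> d t \<theta> < \<epsilon>}))"

definition uniformly_continuous_wrt :: "'b set \<Rightarrow> ('b \<Rightarrow> 'b \<Rightarrow> real) \<Rightarrow> ('b \<Rightarrow> real) \<Rightarrow> bool" where
  "uniformly_continuous_wrt \<Theta> d f \<longleftrightarrow>
     (\<forall>\<epsilon>>0. \<exists>\<delta>>0. \<forall>s\<in>\<Theta>. \<forall>t\<in>\<Theta>. d s t < \<delta> \<longrightarrow> \<bar>f s - f t\<bar> < \<epsilon>)"

end

(*
  Dudley's chaining argument. With scales r_m = (diam + 1) 2^-m, let N_m be nested nets of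
  mesh r_m, starting from N_0 = {theta0}, and let D_m be the largest increment of X over pairs
  of points of N_(m+1) at distance at most 5 r_m. Each D_m is a maximum of at most
  (m + 2)^2 N(r_(m+1))^2 nearly sub-Gaussian variables of scale 5 r_m, so the finiteness of the
  entropy integral, in its dyadic form sum_m r_m sqrt (ln N(r_m)) < oo, makes U = sum_m D_m
  exponentially integrable of every order. Where U is finite, X is uniformly continuous on the
  countable set of all net points, and its oscillation around theta0 is at most U; the
  continuous extension is a separable version of X, and every separable version coincides with
  it almost surely.
*)
theory Submission
  imports Defs
begin

section \<open>Nearly sub-Gaussian variables and their maxima\<close>

definition nearly_subgaussian_rv :: "'a measure \<Rightarrow> real \<Rightarrow> real \<Rightarrow> ('a \<Rightarrow> real) \<Rightarrow> bool" where
  "nearly_subgaussian_rv M C s Z \<longleftrightarrow>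
     (\<forall>l>0. (\<integral>\<^sup>+\<omega>. ennreal (exp (l * Z \<omega>)) \<partial>M) \<le> ennreal (C * exp (l\<^sup>2 * s\<^sup>2 / 2)))"

lemma nearly_subgaussian_rvD:
  "nearly_subgaussian_rv M C s Z \<Longrightarrow> l > 0 \<Longrightarrow>
     (\<integral>\<^sup>+\<omega>. ennreal (exp (l * Z \<omega>)) \<partial>M) \<le> ennreal (C * exp (l\<^sup>2 * s\<^sup>2 / 2))"
  unfolding nearly_subgaussian_rv_def by blast

lemma nearly_subgaussian_rv_mono:
  assumes "nearly_subgaussian_rv M C s Z" and "0 \<le> C" and "0 \<le> s" and "s \<le> s'"
  shows "nearly_subgaussian_rv M C s' Z"
  unfolding nearly_subgaussian_rv_def
proof (intro allI impI)
  fix l :: real assume l: "l > 0"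
  have "s\<^sup>2 \<le> s'\<^sup>2" using assms(3,4) by (intro power_mono) auto
  then have "C * exp (l\<^sup>2 * s\<^sup>2 / 2) \<le> C * exp (l\<^sup>2 * s'\<^sup>2 / 2)"
    using assms(2) by (intro mult_left_mono) (auto intro: mult_left_mono divide_right_mono)
  then show "(\<integral>\<^sup>+\<omega>. ennreal (exp (l * Z \<omega>)) \<partial>M) \<le> ennreal (C * exp (l\<^sup>2 * s'\<^sup>2 / 2))"
    using nearly_subgaussian_rvD[OF assms(1) l] by (meson ennreal_leI order.trans)
qed

lemma nearly_subgaussian_increment:
  assumes "nearly_subgaussian M \<Theta> d X"
  obtains C where "C \<ge> 1"
    and "\<And>\<theta> \<phi>. \<theta> \<in> \<Theta> \<Longrightarrow> \<phi> \<in> \<Theta> \<Longrightarrow> nearly_subgaussian_rv M C (d \<theta> \<phi>) (\<lambda>\<omega>. X \<theta> \<omega> - X \<phi> \<omega>)"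
  using assms unfolding nearly_subgaussian_def nearly_subgaussian_rv_def by blast

lemma nearly_subgaussian_measurable:
  "nearly_subgaussian M \<Theta> d X \<Longrightarrow> \<theta> \<in> \<Theta> \<Longrightarrow> X \<theta> \<in> borel_measurable M"
  unfolding nearly_subgaussian_def by (auto intro: borel_measurable_integrable)

lemma exp_mult_abs_le: "exp (l * \<bar>z\<bar>) \<le> exp (l * z) + exp (l * - z)"
  for l z :: real
  by (cases "z \<ge> 0") (auto simp: add_increasing add_increasing2)

lemma nn_integral_abs_le_nearly_subgaussian:
  assumes Z: "Z \<in> borel_measurable M" and C: "C \<ge> 1" and s: "0 \<le> s"
    and pos: "nearly_subgaussian_rv M C s Z" and neg: "nearly_subgaussian_rv M C s (\<lambda>\<omega>. - Z \<omega>)"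
  shows "(\<integral>\<^sup>+\<omega>. ennreal \<bar>Z \<omega>\<bar> \<partial>M) \<le> ennreal (6 * C * s)"
proof (rule ennreal_le_epsilon)
  fix e :: real assume e: "0 < e"
  define \<eta> where "\<eta> = e / (6 * C)"
  have \<eta>: "\<eta> > 0" using e C by (simp add: \<eta>_def)
  define l where "l = 1 / (s + \<eta>)"
  have l: "l > 0" using s \<eta> by (simp add: l_def)
  have ls: "l * (s + \<eta>) = 1" using s \<eta> by (simp add: l_def)
  \<comment> \<open>\<open>x \<le> e\<^sup>x\<close> at \<open>x = l |Z|\<close>; with \<open>l = 1/(s + \<eta>)\<close> both exponential moments stay below \<open>3 C\<close>.\<close>
  have pw: "ennreal \<bar>Z \<omega>\<bar> \<le> ennreal (s + \<eta>) *
      (ennreal (exp (l * Z \<omega>)) + ennreal (exp (l * - Z \<omega>)))" for \<omega>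
  proof -
    have "\<bar>Z \<omega>\<bar> = (s + \<eta>) * (l * \<bar>Z \<omega>\<bar>)" using ls by (simp add: mult_ac)
    also have "l * \<bar>Z \<omega>\<bar> \<le> exp (l * \<bar>Z \<omega>\<bar>)" using exp_ge_add_one_self[of "l * \<bar>Z \<omega>\<bar>"] by linarith
    also have "exp (l * \<bar>Z \<omega>\<bar>) \<le> exp (l * Z \<omega>) + exp (l * - Z \<omega>)"
      by (rule exp_mult_abs_le)
    finally have "\<bar>Z \<omega>\<bar> \<le> (s + \<eta>) * (exp (l * Z \<omega>) + exp (l * - Z \<omega>))"
      using s \<eta> by (simp add: mult_left_mono)
    then have "ennreal \<bar>Z \<omega>\<bar> \<le> ennreal ((s + \<eta>) * (exp (l * Z \<omega>) + exp (l * - Z \<omega>)))"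
      by (rule ennreal_leI)
    then show ?thesis
      using s \<eta> by (simp add: ennreal_mult ennreal_plus[symmetric] del: ennreal_plus)
  qed
  have moment: "C * exp (l\<^sup>2 * s\<^sup>2 / 2) \<le> 3 * C"
  proof -
    have "l * s \<le> 1" using ls \<eta> l by (simp add: distrib_left) (smt (verit) mult_pos_pos)
    then have "l\<^sup>2 * s\<^sup>2 \<le> 1" using l s by (simp add: power_mult_distrib[symmetric] power_le_one)
    then have "exp (l\<^sup>2 * s\<^sup>2 / 2) \<le> exp 1" by simp
    also have "\<dots> \<le> 3" by (rule exp_le)
    finally show ?thesis using C by simp
  qed
  have "(\<integral>\<^sup>+\<omega>. ennreal \<bar>Z \<omega>\<bar> \<partial>M) \<le> (\<integral>\<^sup>+\<omega>. ennreal (s + \<eta>) *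
      (ennreal (exp (l * Z \<omega>)) + ennreal (exp (l * - Z \<omega>))) \<partial>M)"
    by (intro nn_integral_mono pw)
  also have "\<dots> = ennreal (s + \<eta>) * ((\<integral>\<^sup>+\<omega>. ennreal (exp (l * Z \<omega>)) \<partial>M)
      + (\<integral>\<^sup>+\<omega>. ennreal (exp (l * - Z \<omega>)) \<partial>M))"
    using Z by (simp add: nn_integral_cmult nn_integral_add)
  also have "\<dots> \<le> ennreal (s + \<eta>) * (ennreal (3 * C) + ennreal (3 * C))"
    using nearly_subgaussian_rvD[OF pos l] nearly_subgaussian_rvD[OF neg l] ennreal_leI[OF moment]
    by (intro mult_left_mono add_mono) auto
  also have "\<dots> = ennreal (6 * C * s) + ennreal e"
    using C s \<eta> e
    by (simp add: \<eta>_def field_simps ennreal_mult[symmetric] ennreal_plus[symmetric] del: ennreal_plus)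
  finally show "(\<integral>\<^sup>+\<omega>. ennreal \<bar>Z \<omega>\<bar> \<partial>M) \<le> ennreal (6 * C * s) + ennreal e" .
qed

lemma nn_integral_exp_abs_le_nearly_subgaussian:
  assumes Z: "Z \<in> borel_measurable M" and l: "l > 0" and C: "0 \<le> C"
    and pos: "nearly_subgaussian_rv M C s Z" and neg: "nearly_subgaussian_rv M C s (\<lambda>\<omega>. - Z \<omega>)"
  shows "(\<integral>\<^sup>+\<omega>. ennreal (exp (l * \<bar>Z \<omega>\<bar>)) \<partial>M) \<le> ennreal (2 * C * exp (l\<^sup>2 * s\<^sup>2 / 2))"
proof -
  have "(\<integral>\<^sup>+\<omega>. ennreal (exp (l * \<bar>Z \<omega>\<bar>)) \<partial>M)
      \<le> (\<integral>\<^sup>+\<omega>. ennreal (exp (l * Z \<omega>)) + ennreal (exp (l * - Z \<omega>)) \<partial>M)"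
    using exp_mult_abs_le[of l "Z _"]
    by (intro nn_integral_mono) (simp add: ennreal_plus[symmetric] ennreal_leI del: ennreal_plus)
  also have "\<dots> = (\<integral>\<^sup>+\<omega>. ennreal (exp (l * Z \<omega>)) \<partial>M) + (\<integral>\<^sup>+\<omega>. ennreal (exp (l * - Z \<omega>)) \<partial>M)"
    using Z by (intro nn_integral_add) auto
  also have "\<dots> \<le> ennreal (C * exp (l\<^sup>2 * s\<^sup>2 / 2)) + ennreal (C * exp (l\<^sup>2 * s\<^sup>2 / 2))"
    by (intro add_mono nearly_subgaussian_rvD[OF pos l] nearly_subgaussian_rvD[OF neg l])
  also have "\<dots> \<le> ennreal (2 * C * exp (l\<^sup>2 * s\<^sup>2 / 2))"
    using C by (simp add: ennreal_plus[symmetric] del: ennreal_plus)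
  finally show ?thesis .
qed

lemma exp_excess_Max_abs_le:
  fixes z :: "'q \<Rightarrow> real"
  assumes fin: "finite Q" and ne: "Q \<noteq> {}" and l: "0 \<le> l"
  shows "exp (l * max 0 ((MAX q\<in>Q. \<bar>z q\<bar>) - c)) \<le> 1 + (\<Sum>q\<in>Q. exp (- (l * c)) * exp (l * \<bar>z q\<bar>))"
proof (cases "(MAX q\<in>Q. \<bar>z q\<bar>) \<le> c")
  case True
  then show ?thesis by (simp add: sum_nonneg)
next
  case False
  have "(MAX q\<in>Q. \<bar>z q\<bar>) \<in> (\<lambda>q. \<bar>z q\<bar>) ` Q"
    using fin ne by (intro Max_in) auto
  then obtain q where q: "q \<in> Q" "(MAX q\<in>Q. \<bar>z q\<bar>) = \<bar>z q\<bar>"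
    by auto
  have "exp (l * max 0 ((MAX q\<in>Q. \<bar>z q\<bar>) - c)) = exp (- (l * c)) * exp (l * \<bar>z q\<bar>)"
    using False q by (simp add: right_diff_distrib exp_diff exp_minus field_simps)
  also have "\<dots> \<le> (\<Sum>q\<in>Q. exp (- (l * c)) * exp (l * \<bar>z q\<bar>))"
    using q fin by (intro member_le_sum) auto
  finally show ?thesis by simp
qed

lemma nn_integral_exp_excess_Max_abs_le:
  fixes Z :: "'q \<Rightarrow> 'a \<Rightarrow> real"
  assumes "prob_space M" and fin: "finite Q" and ne: "Q \<noteq> {}"
    and meas: "\<And>q. q \<in> Q \<Longrightarrow> Z q \<in> borel_measurable M"
    and C: "C \<ge> 1" and l: "l > 0"
    and pos: "\<And>q. q \<in> Q \<Longrightarrow> nearly_subgaussian_rv M C s (Z q)"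
    and neg: "\<And>q. q \<in> Q \<Longrightarrow> nearly_subgaussian_rv M C s (\<lambda>\<omega>. - Z q \<omega>)"
    and c: "c = l * s\<^sup>2 / 2 + (ln (2 * C * card Q) + 1) / l"
  shows "(\<integral>\<^sup>+\<omega>. ennreal (exp (l * max 0 ((MAX q\<in>Q. \<bar>Z q \<omega>\<bar>) - c))) \<partial>M) \<le> 2"
proof -
  interpret prob_space M by fact
  define w where "w = exp (- (l * c))"
  have w: "w > 0" by (simp add: w_def)
  have pw: "exp (l * max 0 ((MAX q\<in>Q. \<bar>Z q \<omega>\<bar>) - c)) \<le> 1 + (\<Sum>q\<in>Q. w * exp (l * \<bar>Z q \<omega>\<bar>))" for \<omega>
    unfolding w_def using l by (intro exp_excess_Max_abs_le fin ne) simp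
  \<comment> \<open>The level \<open>c\<close> is tuned exactly so that these terms add up to \<open>e\<^sup>-\<^sup>1\<close>.\<close>
  have level_sum: "(\<Sum>q\<in>Q. w * (2 * C * exp (l\<^sup>2 * s\<^sup>2 / 2))) = exp (-1)"
  proof -
    have K: "2 * C * card Q > 0" using C fin ne by (simp add: card_gt_0_iff)
    have "l * c = l\<^sup>2 * s\<^sup>2 / 2 + ln (2 * C * card Q) + 1"
      using l unfolding c by (simp add: field_simps power2_eq_square)
    then have "exp (l * c) = exp (l\<^sup>2 * s\<^sup>2 / 2) * (2 * C * card Q) * exp 1"
      using K by (simp add: exp_add)
    then have "w = exp (-1) / (exp (l\<^sup>2 * s\<^sup>2 / 2) * (2 * C * card Q))"
      by (simp add: w_def exp_minus exp_minus_inverse field_simps)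
    moreover have "C > 0" "card Q > 0" using C fin ne by (auto simp: card_gt_0_iff)
    ultimately show ?thesis by (simp add: divide_simps mult_ac)
  qed
  have pw': "ennreal (exp (l * max 0 ((MAX q\<in>Q. \<bar>Z q \<omega>\<bar>) - c)))
      \<le> 1 + (\<Sum>q\<in>Q. ennreal w * ennreal (exp (l * \<bar>Z q \<omega>\<bar>)))" for \<omega>
  proof -
    have "ennreal (exp (l * max 0 ((MAX q\<in>Q. \<bar>Z q \<omega>\<bar>) - c)))
        \<le> ennreal (1 + (\<Sum>q\<in>Q. w * exp (l * \<bar>Z q \<omega>\<bar>)))"
      by (rule ennreal_leI[OF pw])
    also have "\<dots> = 1 + (\<Sum>q\<in>Q. ennreal w * ennreal (exp (l * \<bar>Z q \<omega>\<bar>)))"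
      using w by (simp add: sum_nonneg ennreal_mult[symmetric])
    finally show ?thesis .
  qed
  have "(\<integral>\<^sup>+\<omega>. ennreal (exp (l * max 0 ((MAX q\<in>Q. \<bar>Z q \<omega>\<bar>) - c))) \<partial>M)
      \<le> (\<integral>\<^sup>+\<omega>. 1 + (\<Sum>q\<in>Q. ennreal w * ennreal (exp (l * \<bar>Z q \<omega>\<bar>))) \<partial>M)"
    by (intro nn_integral_mono pw')
  also have "\<dots> = 1 + (\<Sum>q\<in>Q. ennreal w * (\<integral>\<^sup>+\<omega>. ennreal (exp (l * \<bar>Z q \<omega>\<bar>)) \<partial>M))"
    using meas by (simp add: nn_integral_add nn_integral_sum nn_integral_cmult emeasure_space_1)
  also have "\<dots> \<le> 1 + (\<Sum>q\<in>Q. ennreal w * ennreal (2 * C * exp (l\<^sup>2 * s\<^sup>2 / 2)))"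
    using C l meas pos neg
    by (intro add_left_mono sum_mono mult_left_mono nn_integral_exp_abs_le_nearly_subgaussian) auto
  also have "\<dots> = 1 + ennreal (exp (-1))"
    using w C by (simp add: level_sum ennreal_mult[symmetric] del: sum_constant)
  also have "\<dots> \<le> 1 + 1"
    by (intro add_left_mono) (simp add: ennreal_le_1)
  finally show ?thesis by simp
qed

lemma exp_weighted_sum_le:
  fixes a x :: "nat \<Rightarrow> real"
  assumes a0: "\<And>m. 0 \<le> a m" and a1: "sum a {..<N} \<le> 1"
  shows "exp (\<Sum>m<N. a m * x m) \<le> (1 - sum a {..<N}) + (\<Sum>m<N. a m * exp (x m))"
proof -
  define a' where "a' m = (if m < N then a m else 1 - sum a {..<N})" for m
  define y where "y m = (if m < N then x m else 0)" for m
  have "sum a' {..N} = 1"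
    by (simp add: a'_def lessThan_Suc_atMost[symmetric])
  then have "exp (\<Sum>i\<in>{..N}. a' i *\<^sub>R y i) \<le> (\<Sum>i\<in>{..N}. a' i * exp (y i))"
    using a0 a1 exp_convex by (intro convex_on_sum) (auto simp: a'_def)
  then show ?thesis
    by (simp add: lessThan_Suc_atMost[symmetric] a'_def y_def)
qed

lemma nn_integral_exp_weighted_sum_le:
  fixes a :: "nat \<Rightarrow> real" and x :: "nat \<Rightarrow> 'a \<Rightarrow> real"
  assumes "prob_space M" and a0: "\<And>m. 0 \<le> a m" and a1: "sum a {..<N} \<le> 1" and B: "1 \<le> B"
    and meas: "\<And>m. x m \<in> borel_measurable M"
    and bnd: "\<And>m. m < N \<Longrightarrow> (\<integral>\<^sup>+\<omega>. ennreal (exp (x m \<omega>)) \<partial>M) \<le> ennreal B"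
  shows "(\<integral>\<^sup>+\<omega>. ennreal (exp (\<Sum>m<N. a m * x m \<omega>)) \<partial>M) \<le> ennreal B"
proof -
  interpret prob_space M by fact
  have "(\<integral>\<^sup>+\<omega>. ennreal (exp (\<Sum>m<N. a m * x m \<omega>)) \<partial>M)
      \<le> (\<integral>\<^sup>+\<omega>. ennreal (1 - sum a {..<N}) + (\<Sum>m<N. ennreal (a m) * ennreal (exp (x m \<omega>))) \<partial>M)"
  proof (rule nn_integral_mono)
    fix \<omega>
    have "ennreal (exp (\<Sum>m<N. a m * x m \<omega>))
        \<le> ennreal ((1 - sum a {..<N}) + (\<Sum>m<N. a m * exp (x m \<omega>)))"
      using a0 a1 by (intro ennreal_leI exp_weighted_sum_le)
    also have "\<dots> = ennreal (1 - sum a {..<N}) + (\<Sum>m<N. ennreal (a m) * ennreal (exp (x m \<omega>)))"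
      using a0 a1 by (simp add: sum_nonneg ennreal_mult[symmetric])
    finally show "ennreal (exp (\<Sum>m<N. a m * x m \<omega>))
        \<le> ennreal (1 - sum a {..<N}) + (\<Sum>m<N. ennreal (a m) * ennreal (exp (x m \<omega>)))" .
  qed
  also have "\<dots> = ennreal (1 - sum a {..<N}) + (\<Sum>m<N. ennreal (a m) * (\<integral>\<^sup>+\<omega>. ennreal (exp (x m \<omega>)) \<partial>M))"
    using meas by (simp add: nn_integral_add nn_integral_sum nn_integral_cmult emeasure_space_1)
  also have "\<dots> \<le> ennreal (1 - sum a {..<N}) + (\<Sum>m<N. ennreal (a m) * ennreal B)"
    by (intro add_left_mono sum_mono mult_left_mono bnd) auto
  also have "\<dots> = ennreal ((1 - sum a {..<N}) + sum a {..<N} * B)"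
    using a0 a1 B by (simp add: sum_nonneg ennreal_mult[symmetric] sum_distrib_right)
  also have "\<dots> \<le> ennreal B"
    using mult_nonneg_nonneg[of "B - 1" "1 - sum a {..<N}"] a1 B
    by (intro ennreal_leI) (simp add: algebra_simps)
  finally show ?thesis .
qed

lemma nn_integral_exp_sum_Max_abs_le:
  fixes Z :: "'q \<Rightarrow> 'a \<Rightarrow> real" and Q :: "nat \<Rightarrow> 'q set" and \<sigma> a c :: "nat \<Rightarrow> real"
  assumes M: "prob_space M"
    and fin: "\<And>m. finite (Q m)" and ne: "\<And>m. Q m \<noteq> {}"
    and meas: "\<And>m q. q \<in> Q m \<Longrightarrow> Z q \<in> borel_measurable M" and C: "C \<ge> 1"
    and pos: "\<And>m q. q \<in> Q m \<Longrightarrow> nearly_subgaussian_rv M C (\<sigma> m) (Z q)"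
    and neg: "\<And>m q. q \<in> Q m \<Longrightarrow> nearly_subgaussian_rv M C (\<sigma> m) (\<lambda>\<omega>. - Z q \<omega>)"
    and a: "\<And>m. a m > 0" and a_sum: "\<And>N. sum a {..<N} \<le> 1" and p: "p > 0"
    and c: "\<And>m. c m = p / a m * (\<sigma> m)\<^sup>2 / 2 + (ln (2 * C * card (Q m)) + 1) * a m / p"
    and "summable c"
  shows "(\<integral>\<^sup>+\<omega>. ennreal (exp (p * (\<Sum>m<N. MAX q\<in>Q m. \<bar>Z q \<omega>\<bar>))) \<partial>M)
    \<le> ennreal (2 * exp (p * suminf c))"
proof -
  define lam where "lam m = p / a m" for m
  have lam: "lam m > 0" for m using a[of m] p by (simp add: lam_def)
  have c_lam: "c m = lam m * (\<sigma> m)\<^sup>2 / 2 + (ln (2 * C * card (Q m)) + 1) / lam m" for m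
    using a[of m] p by (simp add: c lam_def)
  have c_nonneg: "c m \<ge> 0" for m
    using C fin[of m] ne[of m] mult_mono[of 1 "2 * C" 1 "real (card (Q m))"] a[of m] p
    by (simp add: c Suc_le_eq card_gt_0_iff)
  define D where "D m \<omega> = (MAX q\<in>Q m. \<bar>Z q \<omega>\<bar>)" for m \<omega>
  have D: "D m \<in> borel_measurable M" for m
    unfolding D_def by (intro borel_measurable_Max fin) (use meas in measurable)
  define x where "x m \<omega> = lam m * max 0 (D m \<omega> - c m)" for m \<omega>
  have x: "x m \<in> borel_measurable M" for m unfolding x_def using D[of m] by measurable
  have level: "(\<integral>\<^sup>+\<omega>. ennreal (exp (x m \<omega>)) \<partial>M) \<le> ennreal 2" for m
    using nn_integral_exp_excess_Max_abs_le[OF M fin ne meas C lam pos neg c_lam]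
    by (simp add: x_def D_def)
  \<comment> \<open>Each maximum is split into its level \<open>c m\<close> and its excess; the excesses are recombined by Jensen with the weights \<open>a m\<close>.\<close>
  have pw: "p * (\<Sum>m<N. D m \<omega>) \<le> p * suminf c + (\<Sum>m<N. a m * x m \<omega>)" for \<omega>
  proof -
    have "p * D m \<omega> \<le> p * c m + a m * x m \<omega>" for m
      using a[of m] p by (simp add: x_def lam_def distrib_left[symmetric] mult_left_mono)
    then have "p * (\<Sum>m<N. D m \<omega>) \<le> p * (\<Sum>m<N. c m) + (\<Sum>m<N. a m * x m \<omega>)"
      by (simp add: sum_distrib_left sum.distrib[symmetric] sum_mono)
    also have "(\<Sum>m<N. c m) \<le> suminf c"
      using c_nonneg by (intro sum_le_suminf \<open>summable c\<close>) auto
    finally show ?thesis using p by simp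
  qed
  have "(\<integral>\<^sup>+\<omega>. ennreal (exp (p * (\<Sum>m<N. D m \<omega>))) \<partial>M)
      \<le> (\<integral>\<^sup>+\<omega>. ennreal (exp (p * suminf c)) * ennreal (exp (\<Sum>m<N. a m * x m \<omega>)) \<partial>M)"
    using pw by (intro nn_integral_mono) (simp add: ennreal_mult[symmetric] exp_add[symmetric])
  also have "\<dots> = ennreal (exp (p * suminf c)) * (\<integral>\<^sup>+\<omega>. ennreal (exp (\<Sum>m<N. a m * x m \<omega>)) \<partial>M)"
    using x by (intro nn_integral_cmult) measurable
  also have "\<dots> \<le> ennreal (exp (p * suminf c)) * ennreal 2"
    using a a_sum x level
    by (intro mult_left_mono nn_integral_exp_weighted_sum_le[OF M]) (auto simp: less_imp_le)
  finally show ?thesis by (simp add: D_def ennreal_mult'' mult.commute)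
qed

lemma exp_moments_sum_Max_abs_bounded:
  fixes Z :: "'q \<Rightarrow> 'a \<Rightarrow> real" and Q :: "nat \<Rightarrow> 'q set" and \<sigma> :: "nat \<Rightarrow> real"
  assumes M: "prob_space M"
    and fin: "\<And>m. finite (Q m)" and ne: "\<And>m. Q m \<noteq> {}"
    and meas: "\<And>m q. q \<in> Q m \<Longrightarrow> Z q \<in> borel_measurable M"
    and C: "C \<ge> 1" and \<sigma>: "\<And>m. \<sigma> m > 0"
    and pos: "\<And>m q. q \<in> Q m \<Longrightarrow> nearly_subgaussian_rv M C (\<sigma> m) (Z q)"
    and neg: "\<And>m q. q \<in> Q m \<Longrightarrow> nearly_subgaussian_rv M C (\<sigma> m) (\<lambda>\<omega>. - Z q \<omega>)"
    and summ: "summable (\<lambda>m. \<sigma> m * sqrt (ln (2 * C * card (Q m)) + 1))"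
    and p: "p > 0"
  shows "\<exists>K. \<forall>N. (\<integral>\<^sup>+\<omega>. ennreal (exp (p * (\<Sum>m<N. MAX q\<in>Q m. \<bar>Z q \<omega>\<bar>))) \<partial>M) \<le> ennreal K"
proof -
  define L where "L m = ln (2 * C * card (Q m)) + 1" for m
  have L: "L m \<ge> 1" for m
    using C fin[of m] ne[of m] mult_mono[of 1 "2 * C" 1 "real (card (Q m))"]
    by (simp add: L_def Suc_le_eq card_gt_0_iff)
  \<comment> \<open>Weights proportional to \<open>\<sigma>\<^sub>m / \<surd>L\<^sub>m\<close> make the levels \<open>c\<^sub>m\<close> proportional to \<open>\<sigma>\<^sub>m \<surd>L\<^sub>m\<close>.\<close>
  define b where "b m = \<sigma> m / sqrt (L m)" for m
  have b_pos: "0 < b m" for m using \<sigma>[of m] L[of m] by (simp add: b_def)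
  have summ_L: "summable (\<lambda>m. \<sigma> m * sqrt (L m))" using summ by (simp add: L_def)
  have "summable b"
  proof (rule summable_comparison_test'[OF summ_L, where N = 0])
    show "norm (b m) \<le> \<sigma> m * sqrt (L m)" for m
      using \<sigma>[of m] L[of m] b_pos[of m] order.trans[of "b m" "\<sigma> m" "\<sigma> m * sqrt (L m)"]
      by (simp add: b_def divide_le_eq)
  qed
  define B where "B = suminf b"
  have B: "B > 0" unfolding B_def by (rule suminf_pos[OF \<open>summable b\<close> b_pos])
  define a where "a m = b m / B" for m
  have a: "a m > 0" for m using b_pos[of m] B by (simp add: a_def)
  have a_sum: "sum a {..<N} \<le> 1" for N
    using sum_le_suminf[OF \<open>summable b\<close>, of "{..<N}"] b_pos B
    by (simp add: a_def B_def sum_divide_distrib[symmetric] less_imp_le)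
  define c where "c m = p / a m * (\<sigma> m)\<^sup>2 / 2 + L m * a m / p" for m
  have c_eq: "c m = (p * B / 2 + 1 / (B * p)) * (\<sigma> m * sqrt (L m))" for m
  proof -
    define r where "r = sqrt (L m)"
    have r: "r > 0" "L m = r * r" using L[of m] by (auto simp: r_def)
    show ?thesis using \<sigma>[of m] B p
      unfolding c_def a_def b_def r_def[symmetric] unfolding r(2)
      by (simp add: field_simps power2_eq_square)
  qed
  have "summable c" unfolding c_eq using summ_L by (rule summable_mult)
  have "(\<integral>\<^sup>+\<omega>. ennreal (exp (p * (\<Sum>m<N. MAX q\<in>Q m. \<bar>Z q \<omega>\<bar>))) \<partial>M)
      \<le> ennreal (2 * exp (p * suminf c))" for N
    by (rule nn_integral_exp_sum_Max_abs_le[where \<sigma> = \<sigma> and a = a and c = c])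
      (use M fin ne meas C pos neg a a_sum p \<open>summable c\<close> in \<open>auto simp: c_def L_def\<close>)
  then show ?thesis by blast
qed

lemma
  fixes D :: "nat \<Rightarrow> 'a \<Rightarrow> real"
  assumes meas: "\<And>m. D m \<in> borel_measurable M" and D: "\<And>m \<omega>. 0 \<le> D m \<omega>" and p: "p > 0"
    and bnd: "\<And>N. (\<integral>\<^sup>+\<omega>. ennreal (exp (p * (\<Sum>m<N. D m \<omega>))) \<partial>M) \<le> ennreal K"
  shows AE_summable_of_exp_partial_sums: "AE \<omega> in M. summable (\<lambda>m. D m \<omega>)"
    and nn_integral_exp_suminf_le: "(\<integral>\<^sup>+\<omega>. ennreal (exp (p * (\<Sum>m. D m \<omega>))) \<partial>M) \<le> ennreal K"
proof -
  define F where "F N \<omega> = ennreal (exp (p * (\<Sum>m<N. D m \<omega>)))" for N \<omega>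
  have F: "F N \<in> borel_measurable M" for N unfolding F_def using meas by measurable
  have F_inc: "incseq (\<lambda>N. F N \<omega>)" for \<omega>
    using D p by (intro incseq_SucI) (simp add: F_def ennreal_leI)
  then have "incseq F" by (auto simp: incseq_def le_fun_def)
  have "(\<integral>\<^sup>+\<omega>. (SUP N. F N \<omega>) \<partial>M) = (SUP N. \<integral>\<^sup>+\<omega>. F N \<omega> \<partial>M)"
    by (rule nn_integral_monotone_convergence_SUP[OF \<open>incseq F\<close> F])
  also have "\<dots> \<le> ennreal K"
    using bnd by (intro SUP_least) (simp add: F_def)
  finally have SUP: "(\<integral>\<^sup>+\<omega>. (SUP N. F N \<omega>) \<partial>M) \<le> ennreal K" .
  then have "AE \<omega> in M. (SUP N. F N \<omega>) \<noteq> \<infinity>"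
    using F by (intro nn_integral_noteq_infinite) (auto simp: top_unique)
  then show summable: "AE \<omega> in M. summable (\<lambda>m. D m \<omega>)"
  proof eventually_elim
    case (elim \<omega>)
    define S where "S = enn2real (SUP N. F N \<omega>)"
    have "p * (\<Sum>m<N. D m \<omega>) \<le> ln S" for N
    proof -
      have "F N \<omega> \<le> (SUP N. F N \<omega>)" by (rule SUP_upper) simp
      then have "enn2real (F N \<omega>) \<le> S"
        unfolding S_def using elim by (intro enn2real_mono) (simp_all only: less_top infinity_ennreal_def)
      then have "exp (p * (\<Sum>m<N. D m \<omega>)) \<le> S" by (simp add: F_def)
      then show ?thesis by (metis exp_gt_zero less_le_trans ln_exp ln_le_cancel_iff)
    qed
    then show ?case
      using D p by (intro summableI_nonneg_bounded[where x = "ln S / p"]) (auto simp: field_simps)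
  qed
  have "AE \<omega> in M. ennreal (exp (p * (\<Sum>m. D m \<omega>))) = (SUP N. F N \<omega>)"
    using summable
  proof eventually_elim
    case (elim \<omega>)
    have "(\<lambda>N. F N \<omega>) \<longlonglongrightarrow> ennreal (exp (p * (\<Sum>m. D m \<omega>)))"
      unfolding F_def using elim by (intro tendsto_intros summable_LIMSEQ)
    then show ?case using LIMSEQ_SUP[OF F_inc] by (rule LIMSEQ_unique)
  qed
  then show "(\<integral>\<^sup>+\<omega>. ennreal (exp (p * (\<Sum>m. D m \<omega>))) \<partial>M) \<le> ennreal K"
    using SUP by (simp add: nn_integral_cong_AE)
qed

section \<open>Covering numbers\<close>

lemma
  assumes "semimetric_on \<Theta> d"
  shows semimetric_on_nonneg: "s \<in> \<Theta> \<Longrightarrow> t \<in> \<Theta> \<Longrightarrow> 0 \<le> d s t"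
    and semimetric_on_sym: "s \<in> \<Theta> \<Longrightarrow> t \<in> \<Theta> \<Longrightarrow> d s t = d t s"
    and semimetric_on_refl: "s \<in> \<Theta> \<Longrightarrow> d s s = 0"
    and semimetric_on_triangle: "r \<in> \<Theta> \<Longrightarrow> s \<in> \<Theta> \<Longrightarrow> t \<in> \<Theta> \<Longrightarrow> d r t \<le> d r s + d s t"
  using assms unfolding semimetric_on_def by blast+

lemma totally_bounded_wrtD:
  "totally_bounded_wrt \<Theta> d \<Longrightarrow> e > 0 \<Longrightarrow> \<exists>F. finite F \<and> F \<subseteq> \<Theta> \<and> \<Theta> \<subseteq> (\<Union>c\<in>F. {t. d c t < e})"
  unfolding totally_bounded_wrt_def by blast

lemma bdd_above_dist_totally_bounded:
  assumes semi: "semimetric_on \<Theta> d" and tb: "totally_bounded_wrt \<Theta> d"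
  shows "bdd_above {d s t | s t. s \<in> \<Theta> \<and> t \<in> \<Theta>}"
proof -
  obtain F where F: "finite F" "F \<subseteq> \<Theta>" "\<Theta> \<subseteq> (\<Union>c\<in>F. {t. d c t < 1})"
    using totally_bounded_wrtD[OF tb zero_less_one] by blast
  define K where "K = Max (insert 0 ((\<lambda>(x, y). d x y) ` (F \<times> F)))"
  have K: "x \<in> F \<Longrightarrow> y \<in> F \<Longrightarrow> d x y \<le> K" for x y
    unfolding K_def using F(1) by (intro Max_ge) auto
  have "d s t \<le> K + 2" if "s \<in> \<Theta>" "t \<in> \<Theta>" for s t
  proof -
    obtain c1 where c1: "c1 \<in> F" "d c1 s < 1" using F(3) \<open>s \<in> \<Theta>\<close> by blast
    obtain c2 where c2: "c2 \<in> F" "d c2 t < 1" using F(3) \<open>t \<in> \<Theta>\<close> by blast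
    have \<Theta>: "c1 \<in> \<Theta>" "c2 \<in> \<Theta>" using c1 c2 F(2) by auto
    have "d s t \<le> d s c1 + d c1 t" "d c1 t \<le> d c1 c2 + d c2 t"
      using semimetric_on_triangle[OF semi that(1) \<Theta>(1) that(2)]
        semimetric_on_triangle[OF semi \<Theta> that(2)] by simp_all
    then show ?thesis
      using K[OF c1(1) c2(1)] c1 c2 semimetric_on_sym[OF semi, of s c1] \<Theta> that by linarith
  qed
  then show ?thesis unfolding bdd_above_def by blast
qed

lemma dist_le_diameter_wrt:
  assumes "semimetric_on \<Theta> d" and "totally_bounded_wrt \<Theta> d" and "s \<in> \<Theta>" and "t \<in> \<Theta>"
  shows "d s t \<le> diameter_wrt \<Theta> d"
  unfolding diameter_wrt_def
  by (rule cSup_upper[OF _ bdd_above_dist_totally_bounded[OF assms(1,2)]]) (use assms in blast)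

lemma covering_number_attained:
  assumes "totally_bounded_wrt \<Theta> d" and "e > 0"
  shows "\<exists>F. finite F \<and> card F = covering_number \<Theta> d e \<and> F \<subseteq> \<Theta> \<and> \<Theta> \<subseteq> (\<Union>c\<in>F. {t. d c t < e})"
proof -
  obtain F where "finite F" "F \<subseteq> \<Theta>" "\<Theta> \<subseteq> (\<Union>c\<in>F. {t. d c t < e})"
    using totally_bounded_wrtD[OF assms] by blast
  then have "\<exists>n F. finite F \<and> card F = n \<and> F \<subseteq> \<Theta> \<and> \<Theta> \<subseteq> (\<Union>c\<in>F. {t. d c t < e})"
    by blast
  then show ?thesis unfolding covering_number_def by (rule LeastI_ex)
qed

lemma covering_number_le:
  assumes "finite F" and "F \<subseteq> \<Theta>" and "\<Theta> \<subseteq> (\<Union>c\<in>F. {t. d c t < e})"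
  shows "covering_number \<Theta> d e \<le> card F"
proof -
  have "\<exists>G. finite G \<and> card G = card F \<and> G \<subseteq> \<Theta> \<and> \<Theta> \<subseteq> (\<Union>c\<in>G. {t. d c t < e})"
    using assms by blast
  then show ?thesis unfolding covering_number_def by (rule Least_le)
qed

lemma covering_number_antimono:
  assumes "totally_bounded_wrt \<Theta> d" and "0 < e" and "e \<le> e'"
  shows "covering_number \<Theta> d e' \<le> covering_number \<Theta> d e"
proof -
  obtain F where F: "finite F" "card F = covering_number \<Theta> d e" "F \<subseteq> \<Theta>"
      "\<Theta> \<subseteq> (\<Union>c\<in>F. {t. d c t < e})"
    using covering_number_attained[OF assms(1,2)] by blast
  have "\<Theta> \<subseteq> (\<Union>c\<in>F. {t. d c t < e'})"
  proof
    fix t assume "t \<in> \<Theta>"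
    then obtain c where "c \<in> F" "d c t < e" using F(4) by blast
    then show "t \<in> (\<Union>c\<in>F. {t. d c t < e'})" using assms(3) by (intro UN_I[of c]) auto
  qed
  then show ?thesis using covering_number_le[OF F(1,3)] F(2) by simp
qed

lemma covering_number_ge_1:
  assumes "totally_bounded_wrt \<Theta> d" and "\<Theta> \<noteq> {}" and "e > 0"
  shows "1 \<le> covering_number \<Theta> d e"
proof -
  obtain F where F: "finite F" "card F = covering_number \<Theta> d e" "\<Theta> \<subseteq> (\<Union>c\<in>F. {t. d c t < e})"
    using covering_number_attained[OF assms(1,3)] by blast
  then have "F \<noteq> {}" using assms(2) by auto
  then have "1 \<le> card F" using F(1) by (simp add: Suc_le_eq card_gt_0_iff)
  then show ?thesis using F(2) by simp
qed

lemma covering_number_eq_1: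
  assumes semi: "semimetric_on \<Theta> d" and tb: "totally_bounded_wrt \<Theta> d"
    and \<theta>: "\<theta> \<in> \<Theta>" and e: "diameter_wrt \<Theta> d < e"
  shows "covering_number \<Theta> d e = 1"
proof -
  have "\<Theta> \<subseteq> (\<Union>c\<in>{\<theta>}. {t. d c t < e})"
  proof
    fix t assume "t \<in> \<Theta>"
    then have "d \<theta> t < e" using dist_le_diameter_wrt[OF semi tb \<theta>] e by (meson le_less_trans)
    then show "t \<in> (\<Union>c\<in>{\<theta>}. {t. d c t < e})" by simp
  qed
  then have "covering_number \<Theta> d e \<le> 1"
    using covering_number_le[of "{\<theta>}" \<Theta>] \<theta> by simp
  moreover have "0 < e"
    using dist_le_diameter_wrt[OF semi tb \<theta> \<theta>] semimetric_on_refl[OF semi \<theta>] e by linarith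
  then have "1 \<le> covering_number \<Theta> d e"
    using covering_number_ge_1[OF tb] \<theta> by blast
  ultimately show ?thesis by linarith
qed

section \<open>Dyadic form of the entropy integral\<close>

lemma disjoint_family_dyadic_intervals:
  fixes R :: real
  assumes "0 < R"
  shows "disjoint_family (\<lambda>m::nat. {R / 2 ^ Suc m<..R / 2 ^ m})"
proof -
  have "{R / 2 ^ Suc m<..R / 2 ^ m} \<inter> {R / 2 ^ Suc k<..R / 2 ^ k} = {}" if "m < k" for m k :: nat
  proof -
    have "(2::real) ^ Suc m \<le> 2 ^ k" using that by (intro power_increasing) auto
    then have "R / 2 ^ k \<le> R / 2 ^ Suc m" using assms by (intro divide_left_mono) auto
    then show ?thesis by auto
  qed
  then show ?thesis
    unfolding disjoint_family_on_def by (metis Int_commute linorder_neqE_nat)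
qed

lemma nn_integral_dyadic_interval:
  fixes R :: real
  assumes "0 < R" and "0 \<le> a"
  shows "(\<integral>\<^sup>+e. ennreal a * indicator {R / 2 ^ Suc m<..R / 2 ^ m} e \<partial>lborel) = ennreal (R / 2 ^ Suc m * a)"
proof -
  have "emeasure lborel {R / 2 ^ Suc m<..R / 2 ^ m} = ennreal (R / 2 ^ m - R / 2 ^ Suc m)"
    using assms by (intro emeasure_lborel_Ioc) (simp add: field_simps)
  also have "R / 2 ^ m - R / 2 ^ Suc m = R / 2 ^ Suc m" by (simp add: field_simps)
  finally show ?thesis
    using assms by (simp add: nn_integral_cmult_indicator ennreal_mult'[symmetric] field_simps)
qed

lemma dyadic_sum_le_nn_integral:
  fixes g :: "real \<Rightarrow> real"
  assumes R: "0 < R"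
    and g_nonneg: "\<And>e. 0 < e \<Longrightarrow> 0 \<le> g e"
    and g_antimono: "\<And>e e'. 0 < e \<Longrightarrow> e \<le> e' \<Longrightarrow> g e' \<le> g e"
    and g_vanish: "\<And>e. \<Delta> < e \<Longrightarrow> g e = 0"
  shows "(\<Sum>m<K. ennreal (R / 2 ^ Suc m * g (R / 2 ^ m)))
    \<le> (\<integral>\<^sup>+e. indicator {0<..\<Delta>} e * ennreal (g e) \<partial>lborel)"
proof -
  define r where "r m = R / 2 ^ m" for m :: nat
  have r_pos: "r m > 0" for m using R by (simp add: r_def)
  define I where "I m = {r (Suc m)<..r m}" for m
  \<comment> \<open>On \<open>I m\<close> the antitone integrand dominates its value at the right endpoint \<open>r m\<close>.\<close>
  have below: "ennreal (g (r m)) * indicator (I m) e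
      \<le> indicator {0<..\<Delta>} e * ennreal (g e) * indicator (I m) e" for m e
  proof (cases "e \<in> I m")
    case True
    then have e: "0 < e" "e \<le> r m" using r_pos[of "Suc m"] by (auto simp: I_def)
    show ?thesis
    proof (cases "r m \<le> \<Delta>")
      case True
      then show ?thesis using e \<open>e \<in> I m\<close> g_antimono[OF e] by (simp add: ennreal_leI)
    next
      case False
      then show ?thesis using g_vanish[of "r m"] by simp
    qed
  qed simp
  have "(\<Sum>m<K. ennreal (R / 2 ^ Suc m * g (R / 2 ^ m)))
      = (\<Sum>m<K. \<integral>\<^sup>+e. ennreal (g (r m)) * indicator (I m) e \<partial>lborel)"
    unfolding I_def r_def using R g_nonneg[OF r_pos[unfolded r_def]]
    by (intro sum.cong refl nn_integral_dyadic_interval[symmetric]) auto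
  also have "\<dots> = (\<integral>\<^sup>+e. (\<Sum>m<K. ennreal (g (r m)) * indicator (I m) e) \<partial>lborel)"
    by (rule nn_integral_sum[symmetric]) (simp add: I_def)
  also have "\<dots> \<le> (\<integral>\<^sup>+e. indicator {0<..\<Delta>} e * ennreal (g e) * indicator (\<Union>m<K. I m) e \<partial>lborel)"
    using below disjoint_family_dyadic_intervals[OF R]
    by (intro nn_integral_mono order.trans[OF sum_mono[OF below]])
      (simp add: I_def r_def sum_distrib_left[symmetric] indicator_UN_disjoint[symmetric]
        disjoint_family_on_mono[of "{..<K}" UNIV])
  also have "\<dots> \<le> (\<integral>\<^sup>+e. indicator {0<..\<Delta>} e * ennreal (g e) \<partial>lborel)"
    by (intro nn_integral_mono) (auto simp: indicator_def)
  finally show ?thesis .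
qed

lemma summable_dyadic_of_nn_integral:
  fixes g :: "real \<Rightarrow> real"
  assumes R: "0 < R"
    and g_nonneg: "\<And>e. 0 < e \<Longrightarrow> 0 \<le> g e"
    and g_antimono: "\<And>e e'. 0 < e \<Longrightarrow> e \<le> e' \<Longrightarrow> g e' \<le> g e"
    and g_vanish: "\<And>e. \<Delta> < e \<Longrightarrow> g e = 0"
    and finite_integral: "(\<integral>\<^sup>+e. indicator {0<..\<Delta>} e * ennreal (g e) \<partial>lborel) < \<infinity>"
  shows "summable (\<lambda>m. R / 2 ^ m * g (R / 2 ^ m))"
proof -
  have nonneg: "0 \<le> R / 2 ^ Suc m * g (R / 2 ^ m)" for m
    using R g_nonneg[of "R / 2 ^ m"] by simp
  have "(\<Sum>m<K. ennreal (R / 2 ^ Suc m * g (R / 2 ^ m)))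
      \<le> (\<integral>\<^sup>+e. indicator {0<..\<Delta>} e * ennreal (g e) \<partial>lborel)" for K
    by (rule dyadic_sum_le_nn_integral[OF R]) (fact g_nonneg g_antimono g_vanish)+
  then have "enn2real (\<Sum>m<K. ennreal (R / 2 ^ Suc m * g (R / 2 ^ m)))
      \<le> enn2real (\<integral>\<^sup>+e. indicator {0<..\<Delta>} e * ennreal (g e) \<partial>lborel)" for K
    by (rule enn2real_mono[OF _ finite_integral[unfolded infinity_ennreal_def]])
  then have "(\<Sum>m<K. R / 2 ^ Suc m * g (R / 2 ^ m))
      \<le> enn2real (\<integral>\<^sup>+e. indicator {0<..\<Delta>} e * ennreal (g e) \<partial>lborel)" for K
    using nonneg by (simp add: sum_nonneg)
  then have "summable (\<lambda>m. R / 2 ^ Suc m * g (R / 2 ^ m))"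
    using nonneg by (intro summableI_nonneg_bounded)
  then have "summable (\<lambda>m. 2 * (R / 2 ^ Suc m * g (R / 2 ^ m)))" by (rule summable_mult)
  then show ?thesis by simp
qed

lemma sqrt_2_ln_le: "1 \<le> x \<Longrightarrow> sqrt (2 * ln x) \<le> x"
proof -
  assume x: "1 \<le> x"
  have "2 * ln x \<le> 2 * (x - 1)" using ln_le_minus_one[of x] x by simp
  also have "\<dots> \<le> x\<^sup>2" using zero_le_power2[of "x - 1"] by (simp add: power2_eq_square algebra_simps)
  finally show ?thesis using x by (simp add: real_le_lsqrt real_sqrt_le_iff)
qed

lemma summable_linear_div_power2: "summable (\<lambda>m::nat. (real m + 2) / 2 ^ m)"
proof (rule summable_ratio_test[where c = "3/4" and N = 0])
  fix n :: nat
  have "(real (Suc n) + 2) / 2 ^ Suc n = (real n + 3) / 2 / 2 ^ n" by (simp add: field_simps)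
  also have "\<dots> \<le> 3/4 * ((real n + 2) / 2 ^ n)" by (simp add: field_simps)
  finally show "norm ((real (Suc n) + 2) / 2 ^ Suc n) \<le> 3/4 * norm ((real n + 2) / 2 ^ n)" by simp
qed simp

section \<open>Chaining along dyadic nets\<close>

lemma sum_atLeastLessThan_le_suminf_tail:
  fixes f :: "nat \<Rightarrow> real"
  assumes "summable f" and "\<And>n. 0 \<le> f n" and "m \<le> K"
  shows "sum f {m..<K} \<le> suminf f - sum f {..<m}"
proof -
  have "sum f {..<m} + sum f {m..<K} = sum f {..<K}"
    using assms(3) by (simp add: atLeast0LessThan[symmetric] sum.atLeastLessThan_concat)
  moreover have "sum f {..<K} \<le> suminf f" using assms(1,2) by (intro sum_le_suminf) auto
  ultimately show ?thesis by linarith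
qed

lemma summable_tail_LIMSEQ_zero:
  fixes f :: "nat \<Rightarrow> real"
  assumes "summable f"
  shows "(\<lambda>m. suminf f - sum f {..<m}) \<longlonglongrightarrow> 0"
  using tendsto_diff[OF tendsto_const summable_LIMSEQ[OF assms], of "suminf f"] by simp

locale dudley_chaining =
  fixes M :: "'a measure" and \<Theta> :: "'b set" and d :: "'b \<Rightarrow> 'b \<Rightarrow> real"
    and X :: "'b \<Rightarrow> 'a \<Rightarrow> real" and C :: real and \<theta>0 :: 'b
  assumes prob: "prob_space M"
    and semi: "semimetric_on \<Theta> d"
    and tb: "totally_bounded_wrt \<Theta> d"
    and X_measurable: "\<And>\<theta>. \<theta> \<in> \<Theta> \<Longrightarrow> X \<theta> \<in> borel_measurable M"
    and C: "C \<ge> 1"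
    and increment: "\<And>\<theta> \<phi>. \<theta> \<in> \<Theta> \<Longrightarrow> \<phi> \<in> \<Theta> \<Longrightarrow>
      nearly_subgaussian_rv M C (d \<theta> \<phi>) (\<lambda>\<omega>. X \<theta> \<omega> - X \<phi> \<omega>)"
    and dudley: "dudley_integral \<Theta> d (diameter_wrt \<Theta> d) < \<infinity>"
    and root: "\<theta>0 \<in> \<Theta>"
begin

lemmas d_nonneg = semimetric_on_nonneg[OF semi]
  and d_sym = semimetric_on_sym[OF semi]
  and d_refl = semimetric_on_refl[OF semi]
  and d_triangle = semimetric_on_triangle[OF semi]

definition radius :: "nat \<Rightarrow> real" where
  "radius m = (diameter_wrt \<Theta> d + 1) / 2 ^ m"

lemma diameter_nonneg: "0 \<le> diameter_wrt \<Theta> d"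
  using dist_le_diameter_wrt[OF semi tb root root] d_refl[OF root] by simp

lemma radius_pos: "0 < radius m"
  using diameter_nonneg by (simp add: radius_def)

lemma radius_Suc: "radius (Suc m) = radius m / 2"
  by (simp add: radius_def)

lemma radius_antimono: "k \<le> m \<Longrightarrow> radius m \<le> radius k"
  using diameter_nonneg unfolding radius_def by (intro divide_left_mono) (auto intro: power_increasing)

lemma summable_radius: "summable radius"
proof -
  have "radius = (\<lambda>m. (diameter_wrt \<Theta> d + 1) * (1 / 2) ^ m)"
    by (simp add: radius_def fun_eq_iff power_one_over)
  then show ?thesis by (simp add: summable_mult summable_geometric)
qed

lemma eventually_radius_less: "\<delta> > 0 \<Longrightarrow> \<exists>N. \<forall>n\<ge>N. radius n < \<delta>"
  using order_tendstoD(2)[OF summable_LIMSEQ_zero[OF summable_radius]]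
  by (simp add: eventually_sequentially)

\<comment> \<open>The coarsest net is the base point \<open>\<theta>0\<close>, where all chains end.\<close>
definition cover :: "nat \<Rightarrow> 'b set" where
  "cover m = (if m = 0 then {\<theta>0} else
     (SOME F. finite F \<and> card F = covering_number \<Theta> d (radius m) \<and> F \<subseteq> \<Theta>
        \<and> \<Theta> \<subseteq> (\<Union>c\<in>F. {t. d c t < radius m})))"

lemma cover_spec:
  "finite (cover m) \<and> cover m \<subseteq> \<Theta> \<and> \<Theta> \<subseteq> (\<Union>c\<in>cover m. {t. d c t < radius m})
    \<and> card (cover m) \<le> covering_number \<Theta> d (radius m)"
proof (cases "m = 0")
  case True
  have "\<Theta> \<subseteq> (\<Union>c\<in>{\<theta>0}. {t. d c t < radius 0})"
    using dist_le_diameter_wrt[OF semi tb root] by (force simp: radius_def)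
  then show ?thesis
    using True root covering_number_ge_1[OF tb _ radius_pos] by (auto simp: cover_def)
next
  case False
  from someI_ex[OF covering_number_attained[OF tb radius_pos]] show ?thesis
    using False unfolding cover_def by simp
qed

definition net :: "nat \<Rightarrow> 'b set" where
  "net m = (\<Union>k\<le>m. cover k)"

lemma finite_net: "finite (net m)"
  using cover_spec by (simp add: net_def)

lemma net_subset: "net m \<subseteq> \<Theta>"
  using cover_spec by (auto simp: net_def)

lemma net_mono: "k \<le> m \<Longrightarrow> net k \<subseteq> net m"
  unfolding net_def by (intro UN_mono) auto

lemma net_0: "net 0 = {\<theta>0}"
  by (simp add: net_def cover_def)

lemma root_in_net: "\<theta>0 \<in> net m"
  using net_mono[of 0 m] net_0 by auto

lemma net_covers: "\<theta> \<in> \<Theta> \<Longrightarrow> \<exists>c\<in>net m. d c \<theta> < radius m"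
  using cover_spec[of m] by (fastforce simp: net_def)

lemma card_net: "card (net m) \<le> Suc m * covering_number \<Theta> d (radius m)"
proof -
  have "card (net m) \<le> (\<Sum>k\<le>m. card (cover k))" unfolding net_def by (rule card_UN_le) simp
  also have "\<dots> \<le> (\<Sum>k\<le>m. covering_number \<Theta> d (radius m))"
    using cover_spec covering_number_antimono[OF tb radius_pos radius_antimono]
    by (intro sum_mono) (meson atMost_iff order.trans)
  finally show ?thesis by simp
qed

definition approx :: "nat \<Rightarrow> 'b \<Rightarrow> 'b" where
  "approx m \<theta> = (SOME c. c \<in> net m \<and> d c \<theta> < radius m)"

lemma approx_spec: "\<theta> \<in> \<Theta> \<Longrightarrow> approx m \<theta> \<in> net m \<and> d (approx m \<theta>) \<theta> < radius m"
  unfolding approx_def by (rule someI_ex) (use net_covers in blast)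

lemma approx_in: "\<theta> \<in> \<Theta> \<Longrightarrow> approx m \<theta> \<in> \<Theta>"
  using approx_spec net_subset by blast

definition net_points :: "'b set" where
  "net_points = (\<Union>m. net m)"

lemma countable_net_points: "countable net_points"
  unfolding net_points_def using finite_net by (simp add: countable_finite)

lemma net_points_subset: "net_points \<subseteq> \<Theta>"
  unfolding net_points_def using net_subset by blast

lemma approx_in_net_points: "\<theta> \<in> \<Theta> \<Longrightarrow> approx n \<theta> \<in> net_points"
  using approx_spec[of \<theta> n] by (auto simp: net_points_def)

lemma dense_net_points: "\<theta> \<in> \<Theta> \<Longrightarrow> e > 0 \<Longrightarrow> \<exists>t\<in>net_points. d t \<theta> < e"
  using eventually_radius_less approx_spec approx_in_net_points by (meson order.strict_trans order_refl)

\<comment> \<open>Pairs joined by one chaining step at scale \<open>m\<close>; the factor 5 absorbs the two chain tails and the gap between the endpoints.\<close>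
definition links :: "nat \<Rightarrow> ('b \<times> 'b) set" where
  "links m = {(u, v). u \<in> net (Suc m) \<and> v \<in> net (Suc m) \<and> d u v \<le> 5 * radius m}"

lemma links_subset: "links m \<subseteq> net (Suc m) \<times> net (Suc m)"
  by (auto simp: links_def)

lemma finite_links: "finite (links m)"
  using links_subset finite_net by (meson finite_SigmaI finite_subset)

lemma links_nonempty: "links m \<noteq> {}"
proof -
  have "(\<theta>0, \<theta>0) \<in> links m"
    using root_in_net[of "Suc m"] d_refl[OF root] radius_pos[of m] by (simp add: links_def)
  then show ?thesis by blast
qed

lemma links_in: "q \<in> links m \<Longrightarrow> fst q \<in> \<Theta> \<and> snd q \<in> \<Theta>"
  using links_subset net_subset by fastforce

lemma card_links: "real (card (links m)) \<le> (real (Suc (Suc m)) * covering_number \<Theta> d (radius (Suc m)))\<^sup>2"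
proof -
  have "card (links m) \<le> card (net (Suc m) \<times> net (Suc m))"
    by (rule card_mono) (use finite_net links_subset in auto)
  also have "\<dots> = card (net (Suc m)) * card (net (Suc m))" by (rule card_cartesian_product)
  also have "\<dots> \<le> (Suc (Suc m) * covering_number \<Theta> d (radius (Suc m)))
      * (Suc (Suc m) * covering_number \<Theta> d (radius (Suc m)))"
    using card_net[of "Suc m"] by (intro mult_mono) auto
  finally show ?thesis unfolding power2_eq_square of_nat_mult[symmetric] by (simp only: of_nat_le_iff)
qed

definition link_max :: "nat \<Rightarrow> 'a \<Rightarrow> real" where
  "link_max m \<omega> = (MAX q\<in>links m. \<bar>X (fst q) \<omega> - X (snd q) \<omega>\<bar>)"

lemma link_max_measurable: "link_max m \<in> borel_measurable M"
  unfolding link_max_def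
proof (intro borel_measurable_Max finite_links)
  fix q assume "q \<in> links m"
  then have [measurable]: "X (fst q) \<in> borel_measurable M" "X (snd q) \<in> borel_measurable M"
    using links_in X_measurable by auto
  show "(\<lambda>\<omega>. \<bar>X (fst q) \<omega> - X (snd q) \<omega>\<bar>) \<in> borel_measurable M" by measurable
qed

lemma link_max_ge: "(u, v) \<in> links m \<Longrightarrow> \<bar>X u \<omega> - X v \<omega>\<bar> \<le> link_max m \<omega>"
  unfolding link_max_def by (rule Max_ge) (use finite_links in \<open>force+\<close>)

lemma link_max_nonneg: "0 \<le> link_max m \<omega>"
proof -
  obtain q where "q \<in> links m" using links_nonempty by blast
  then have "\<bar>X (fst q) \<omega> - X (snd q) \<omega>\<bar> \<le> link_max m \<omega>" by (intro link_max_ge) simp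
  then show ?thesis by (meson abs_ge_zero order.trans)
qed

lemma summable_entropy: "summable (\<lambda>m. radius m * sqrt (ln (covering_number \<Theta> d (radius m))))"
proof -
  have "summable (\<lambda>m. (diameter_wrt \<Theta> d + 1) / 2 ^ m
      * sqrt (ln (covering_number \<Theta> d ((diameter_wrt \<Theta> d + 1) / 2 ^ m))))"
  proof (rule summable_dyadic_of_nn_integral)
    show "0 < diameter_wrt \<Theta> d + 1" using diameter_nonneg by simp
    show "0 \<le> sqrt (ln (real (covering_number \<Theta> d e)))" if "0 < e" for e
    proof -
      have "1 \<le> real (covering_number \<Theta> d e)" using covering_number_ge_1[OF tb _ that] root by auto
      then show ?thesis by simp
    qed
    show "sqrt (ln (covering_number \<Theta> d e')) \<le> sqrt (ln (covering_number \<Theta> d e))"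
      if "0 < e" "e \<le> e'" for e e'
    proof -
      have "1 \<le> real (covering_number \<Theta> d e')"
        using covering_number_ge_1[OF tb _ order.strict_trans2[OF that]] root by auto
      moreover have "real (covering_number \<Theta> d e') \<le> covering_number \<Theta> d e"
        using covering_number_antimono[OF tb that] by simp
      ultimately show ?thesis by simp
    qed
    show "sqrt (ln (covering_number \<Theta> d e)) = 0" if "diameter_wrt \<Theta> d < e" for e
      using covering_number_eq_1[OF semi tb root that] by simp
    show "(\<integral>\<^sup>+e. indicator {0<..diameter_wrt \<Theta> d} e
        * ennreal (sqrt (ln (covering_number \<Theta> d e))) \<partial>lborel) < \<infinity>"
      using dudley by (simp add: dudley_integral_def)
  qed
  then show ?thesis by (simp add: radius_def)
qed

\<comment> \<open>\<open>card (links m) \<le> ((m + 2) N(r\<^sub>m\<^sub>+\<^sub>1))\<^sup>2\<close> splits the entropy into a constant, a term linear in \<open>m\<close> and the Dudley term at the next scale.\<close>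
lemma sqrt_ln_card_links_le:
  "sqrt (ln (2 * C * card (links m)) + 1)
    \<le> sqrt (ln (2 * C) + 1) + (real m + 2) + sqrt 2 * sqrt (ln (covering_number \<Theta> d (radius (Suc m))))"
proof -
  define n where "n = real (covering_number \<Theta> d (radius (Suc m)))"
  have n: "1 \<le> n"
    unfolding n_def using covering_number_ge_1[OF tb _ radius_pos] root by auto
  have card: "1 \<le> real (card (links m))"
    using finite_links[of m] links_nonempty[of m] by (simp add: Suc_le_eq card_gt_0_iff)
  have "2 * C * card (links m) \<le> 2 * C * ((real m + 2) * n)\<^sup>2"
    using card_links[of m] C by (intro mult_left_mono) (auto simp: n_def add.commute)
  then have "ln (2 * C * card (links m)) \<le> ln (2 * C * ((real m + 2) * n)\<^sup>2)"
    using card n C by (subst ln_le_cancel_iff) auto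
  also have "\<dots> = ln (2 * C) + 2 * ln (real m + 2) + 2 * ln n"
    using C n by (simp add: ln_mult ln_realpow power_mult_distrib)
  finally have "sqrt (ln (2 * C * card (links m)) + 1)
      \<le> sqrt ((ln (2 * C) + 1) + 2 * ln (real m + 2) + 2 * ln n)"
    by simp
  also have "\<dots> \<le> sqrt ((ln (2 * C) + 1) + 2 * ln (real m + 2)) + sqrt (2 * ln n)"
    using C n by (intro sqrt_add_le_add_sqrt) auto
  also have "sqrt ((ln (2 * C) + 1) + 2 * ln (real m + 2))
      \<le> sqrt (ln (2 * C) + 1) + sqrt (2 * ln (real m + 2))"
    using C by (intro sqrt_add_le_add_sqrt) auto
  also have "sqrt (2 * ln (real m + 2)) \<le> real m + 2" by (rule sqrt_2_ln_le) simp
  finally show ?thesis by (simp add: real_sqrt_mult n_def)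
qed

lemma summable_links_entropy:
  "summable (\<lambda>m. 5 * radius m * sqrt (ln (2 * C * card (links m)) + 1))"
proof -
  define K0 where "K0 = sqrt (ln (2 * C) + 1)"
  define n where "n m = real (covering_number \<Theta> d (radius (Suc m)))" for m
  have "summable (\<lambda>m. 5 * K0 * radius m + 5 * radius 0 * ((real m + 2) / 2 ^ m)
      + 10 * sqrt 2 * (radius (Suc m) * sqrt (ln (n m))))"
    using summable_radius summable_linear_div_power2 summable_entropy[THEN summable_ignore_initial_segment, of 1]
    by (intro summable_add summable_mult) (simp_all add: n_def)
  then show ?thesis
  proof (rule summable_comparison_test'[where N = 0])
    fix m :: nat
    have "1 \<le> 2 * C * card (links m)"
      using C finite_links[of m] links_nonempty[of m] mult_mono[of 1 "2 * C" 1 "real (card (links m))"]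
      by (simp add: Suc_le_eq card_gt_0_iff)
    then have "norm (5 * radius m * sqrt (ln (2 * C * card (links m)) + 1))
        = 5 * radius m * sqrt (ln (2 * C * card (links m)) + 1)"
      using radius_pos[of m] by simp
    also have "\<dots> \<le> 5 * radius m * (K0 + (real m + 2) + sqrt 2 * sqrt (ln (n m)))"
      using sqrt_ln_card_links_le[of m] radius_pos[of m]
      by (intro mult_left_mono) (auto simp: K0_def n_def)
    also have "\<dots> = 5 * K0 * radius m + 5 * radius 0 * ((real m + 2) / 2 ^ m)
          + 10 * sqrt 2 * (radius (Suc m) * sqrt (ln (n m)))"
      by (simp add: radius_Suc radius_def field_simps)
    finally show "norm (5 * radius m * sqrt (ln (2 * C * card (links m)) + 1))
        \<le> 5 * K0 * radius m + 5 * radius 0 * ((real m + 2) / 2 ^ m)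
          + 10 * sqrt 2 * (radius (Suc m) * sqrt (ln (n m)))" .
  qed
qed

lemma link_nearly_subgaussian:
  assumes "q \<in> links m"
  shows "nearly_subgaussian_rv M C (5 * radius m) (\<lambda>\<omega>. X (fst q) \<omega> - X (snd q) \<omega>)"
    and "nearly_subgaussian_rv M C (5 * radius m) (\<lambda>\<omega>. - (X (fst q) \<omega> - X (snd q) \<omega>))"
proof -
  have q: "fst q \<in> \<Theta>" "snd q \<in> \<Theta>" "d (fst q) (snd q) \<le> 5 * radius m"
    using assms links_in by (auto simp: links_def)
  show "nearly_subgaussian_rv M C (5 * radius m) (\<lambda>\<omega>. X (fst q) \<omega> - X (snd q) \<omega>)"
    using q C d_nonneg by (intro nearly_subgaussian_rv_mono[OF increment]) auto
  have "nearly_subgaussian_rv M C (5 * radius m) (\<lambda>\<omega>. X (snd q) \<omega> - X (fst q) \<omega>)"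
    using q C d_nonneg d_sym by (intro nearly_subgaussian_rv_mono[OF increment]) auto
  then show "nearly_subgaussian_rv M C (5 * radius m) (\<lambda>\<omega>. - (X (fst q) \<omega> - X (snd q) \<omega>))"
    by simp
qed

lemma exp_moments_link_max:
  assumes "p > 0"
  shows "\<exists>K. \<forall>N. (\<integral>\<^sup>+\<omega>. ennreal (exp (p * (\<Sum>m<N. link_max m \<omega>))) \<partial>M) \<le> ennreal K"
  unfolding link_max_def
proof (rule exp_moments_sum_Max_abs_bounded[where Z = "\<lambda>q \<omega>. X (fst q) \<omega> - X (snd q) \<omega>"])
  show "(\<lambda>\<omega>. X (fst q) \<omega> - X (snd q) \<omega>) \<in> borel_measurable M" if "q \<in> links m" for m q
    using links_in[OF that] X_measurable by (intro borel_measurable_diff) auto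
qed (use prob finite_links links_nonempty C radius_pos link_nearly_subgaussian
      summable_links_entropy assms in auto)

definition chain_bound :: "'a \<Rightarrow> real" where
  "chain_bound \<omega> = (\<Sum>m. link_max m \<omega>)"

lemma chain_bound_measurable: "chain_bound \<in> borel_measurable M"
  unfolding chain_bound_def using link_max_measurable by measurable

lemma AE_summable_link_max: "AE \<omega> in M. summable (\<lambda>m. link_max m \<omega>)"
proof -
  obtain K where "\<And>N. (\<integral>\<^sup>+\<omega>. ennreal (exp (1 * (\<Sum>m<N. link_max m \<omega>))) \<partial>M) \<le> ennreal K"
    using exp_moments_link_max[of 1] by auto
  then show ?thesis
    by (rule AE_summable_of_exp_partial_sums[OF link_max_measurable link_max_nonneg zero_less_one])
qed

lemma exp_moment_chain_bound:
  assumes "p > 0"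
  shows "(\<integral>\<^sup>+\<omega>. ennreal (exp (p * chain_bound \<omega>)) \<partial>M) < \<infinity>"
proof -
  obtain K where "\<And>N. (\<integral>\<^sup>+\<omega>. ennreal (exp (p * (\<Sum>m<N. link_max m \<omega>))) \<partial>M) \<le> ennreal K"
    using exp_moments_link_max[OF assms] by auto
  then have "(\<integral>\<^sup>+\<omega>. ennreal (exp (p * chain_bound \<omega>)) \<partial>M) \<le> ennreal K"
    unfolding chain_bound_def
    by (rule nn_integral_exp_suminf_le[OF link_max_measurable link_max_nonneg assms])
  then show ?thesis by (simp add: order.strict_trans1)
qed

lemma chain_to_net:
  assumes "m \<le> K" and "s \<in> net K"
  shows "\<exists>u\<in>net m. d s u \<le> 2 * radius m - 2 * radius K
    \<and> \<bar>X s \<omega> - X u \<omega>\<bar> \<le> (\<Sum>k\<in>{m..<K}. link_max k \<omega>)"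
  using assms
proof (induction K arbitrary: s)
  case 0
  then show ?case using net_subset d_refl by (intro bexI[of _ s]) force+
next
  case (Suc K)
  show ?case
  proof (cases "m = Suc K")
    case True
    then show ?thesis using Suc.prems net_subset d_refl by (intro bexI[of _ s]) force+
  next
    case False
    then have mK: "m \<le> K" using Suc.prems by simp
    have s: "s \<in> \<Theta>" using Suc.prems net_subset by blast
    define s' where "s' = approx K s"
    have s': "s' \<in> net K" "d s' s < radius K" "s' \<in> \<Theta>"
      using approx_spec[OF s, of K] approx_in[OF s] by (auto simp: s'_def)
    obtain u where u: "u \<in> net m" "d s' u \<le> 2 * radius m - 2 * radius K"
        "\<bar>X s' \<omega> - X u \<omega>\<bar> \<le> (\<Sum>k\<in>{m..<K}. link_max k \<omega>)"
      using Suc.IH[OF mK s'(1)] by blast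
    have "u \<in> \<Theta>" using u(1) net_subset by blast
    have "(s, s') \<in> links K"
      using Suc.prems s' net_mono[of K "Suc K"] d_sym[OF s s'(3)] radius_pos[of K]
      by (auto simp: links_def)
    then have step: "\<bar>X s \<omega> - X s' \<omega>\<bar> \<le> link_max K \<omega>" by (rule link_max_ge)
    have "d s u \<le> d s s' + d s' u" by (rule d_triangle[OF s s'(3) \<open>u \<in> \<Theta>\<close>])
    then have "d s u \<le> 2 * radius m - 2 * radius (Suc K)"
      using s' u d_sym[OF s s'(3)] by (simp add: radius_Suc)
    moreover have "\<bar>X s \<omega> - X u \<omega>\<bar> \<le> (\<Sum>k\<in>{m..<Suc K}. link_max k \<omega>)"
      using step u(3) mK by simp
    ultimately show ?thesis using u(1) by blast
  qed
qed

lemma net_points_bound: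
  assumes "summable (\<lambda>m. link_max m \<omega>)" and "s \<in> net_points"
  shows "\<bar>X s \<omega> - X \<theta>0 \<omega>\<bar> \<le> chain_bound \<omega>"
proof -
  obtain K where K: "s \<in> net K" using assms(2) by (auto simp: net_points_def)
  then obtain u where "u \<in> net 0" "\<bar>X s \<omega> - X u \<omega>\<bar> \<le> (\<Sum>k\<in>{0..<K}. link_max k \<omega>)"
    using chain_to_net[of 0 K s \<omega>] by auto
  moreover have "(\<Sum>k<K. link_max k \<omega>) \<le> chain_bound \<omega>"
    unfolding chain_bound_def using assms(1) link_max_nonneg by (intro sum_le_suminf) auto
  ultimately show ?thesis using net_0 by (simp add: atLeast0LessThan)
qed

\<comment> \<open>Two close net points are chained down to a common scale \<open>m\<close>, where their ancestors form a link; all three pieces are bounded by the tail of the series from \<open>m\<close> on.\<close>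
lemma net_points_uniformly_continuous:
  assumes summable: "summable (\<lambda>m. link_max m \<omega>)" and "\<eta> > 0"
  shows "\<exists>\<delta>>0. \<forall>s\<in>net_points. \<forall>t\<in>net_points. d s t < \<delta> \<longrightarrow> \<bar>X s \<omega> - X t \<omega>\<bar> \<le> \<eta>"
proof -
  define tail where "tail m = chain_bound \<omega> - (\<Sum>k<m. link_max k \<omega>)" for m
  have tail: "(\<Sum>k\<in>{m..<K}. link_max k \<omega>) \<le> tail m" if "m \<le> K" for m K
    unfolding tail_def chain_bound_def
    using sum_atLeastLessThan_le_suminf_tail[OF summable link_max_nonneg that] .
  have "eventually (\<lambda>m. tail m < \<eta> / 3) sequentially"
    using summable_tail_LIMSEQ_zero[OF summable] \<open>\<eta> > 0\<close>
    unfolding tail_def chain_bound_def by (intro order_tendstoD) auto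
  then obtain m where m: "tail m < \<eta> / 3" by (auto simp: eventually_sequentially)
  have "\<bar>X s \<omega> - X t \<omega>\<bar> \<le> \<eta>"
    if s: "s \<in> net_points" and t: "t \<in> net_points" and st: "d s t < radius m" for s t
  proof -
    obtain K1 K2 where "s \<in> net K1" "t \<in> net K2" using s t by (auto simp: net_points_def)
    then have sK: "s \<in> net (max K1 (max K2 m))" and tK: "t \<in> net (max K1 (max K2 m))"
      using net_mono by (meson max.cobounded1 max.cobounded2 le_max_iff_disj subsetD)+
    define K where "K = max K1 (max K2 m)"
    have mK: "m \<le> K" by (simp add: K_def)
    obtain u where u: "u \<in> net m" "d s u \<le> 2 * radius m - 2 * radius K"
        "\<bar>X s \<omega> - X u \<omega>\<bar> \<le> (\<Sum>k\<in>{m..<K}. link_max k \<omega>)"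
      using chain_to_net[OF mK sK[folded K_def]] by blast
    obtain v where v: "v \<in> net m" "d t v \<le> 2 * radius m - 2 * radius K"
        "\<bar>X t \<omega> - X v \<omega>\<bar> \<le> (\<Sum>k\<in>{m..<K}. link_max k \<omega>)"
      using chain_to_net[OF mK tK[folded K_def]] by blast
    have in\<Theta>: "s \<in> \<Theta>" "t \<in> \<Theta>" "u \<in> \<Theta>" "v \<in> \<Theta>"
      using s t u(1) v(1) net_points_subset net_subset by auto
    have "d u v \<le> d u s + d s t + d t v"
      using d_triangle[OF in\<Theta>(3,1,4)] d_triangle[OF in\<Theta>(1,2,4)] by linarith
    also have "\<dots> \<le> 5 * radius m"
      using u(2) v(2) st radius_pos[of K] d_sym[OF in\<Theta>(3,1)] by linarith
    finally have "(u, v) \<in> links m"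
      using u(1) v(1) net_mono[of m "Suc m"] by (auto simp: links_def)
    then have "\<bar>X u \<omega> - X v \<omega>\<bar> \<le> tail m"
      using link_max_ge[of u v m \<omega>] tail[of m "Suc m"] by simp
    then have "\<bar>X s \<omega> - X t \<omega>\<bar> \<le> 3 * tail m"
      using u(3) v(3) tail[OF mK] by linarith
    then show ?thesis using m by linarith
  qed
  then show ?thesis using radius_pos[of m] by blast
qed

definition limit_field :: "'b \<Rightarrow> 'a \<Rightarrow> real" where
  "limit_field \<theta> \<omega> = lim (\<lambda>n. X (approx n \<theta>) \<omega>)"

lemma approx_close:
  assumes "\<theta> \<in> \<Theta>" and "\<theta>' \<in> \<Theta>"
  shows "d (approx n \<theta>) (approx n \<theta>') < d \<theta> \<theta>' + 2 * radius n"
proof -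
  have "d (approx n \<theta>) (approx n \<theta>') \<le> d (approx n \<theta>) \<theta> + d \<theta> \<theta>' + d \<theta>' (approx n \<theta>')"
    using d_triangle[OF approx_in[OF assms(1), of n] assms(1) approx_in[OF assms(2), of n]]
      d_triangle[OF assms approx_in[OF assms(2), of n]] by linarith
  then show ?thesis
    using approx_spec[OF assms(1), of n] approx_spec[OF assms(2), of n]
      d_sym[OF assms(2) approx_in[OF assms(2), of n]]
    by linarith
qed

lemma limit_field_LIMSEQ:
  assumes summable: "summable (\<lambda>m. link_max m \<omega>)" and \<theta>: "\<theta> \<in> \<Theta>"
  shows "(\<lambda>n. X (approx n \<theta>) \<omega>) \<longlonglongrightarrow> limit_field \<theta> \<omega>"
proof -
  have "Cauchy (\<lambda>n. X (approx n \<theta>) \<omega>)"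
  proof (rule metric_CauchyI)
    fix e :: real assume "e > 0"
    obtain \<delta> where \<delta>: "\<delta> > 0"
        "\<forall>s\<in>net_points. \<forall>t\<in>net_points. d s t < \<delta> \<longrightarrow> \<bar>X s \<omega> - X t \<omega>\<bar> \<le> e / 2"
      using net_points_uniformly_continuous[OF summable, of "e / 2"] \<open>e > 0\<close> by auto
    obtain N where N: "\<forall>n\<ge>N. radius n < \<delta> / 2" using eventually_radius_less[of "\<delta> / 2"] \<delta>(1) by auto
    have "dist (X (approx m \<theta>) \<omega>) (X (approx n \<theta>) \<omega>) < e" if "m \<ge> N" "n \<ge> N" for m n
    proof -
      have "d (approx m \<theta>) (approx n \<theta>) \<le> d (approx m \<theta>) \<theta> + d (approx n \<theta>) \<theta>"
        using d_triangle[OF approx_in[OF \<theta>, of m] \<theta> approx_in[OF \<theta>, of n]]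
          d_sym[OF \<theta> approx_in[OF \<theta>, of n]] by simp
      moreover have "d (approx m \<theta>) \<theta> < \<delta> / 2" "d (approx n \<theta>) \<theta> < \<delta> / 2"
        using approx_spec[OF \<theta>, of m] approx_spec[OF \<theta>, of n] N that by force+
      ultimately have "d (approx m \<theta>) (approx n \<theta>) < \<delta>" by linarith
      then show ?thesis using \<delta>(2) approx_in_net_points[OF \<theta>] \<open>e > 0\<close> by (force simp: dist_real_def)
    qed
    then show "\<exists>M. \<forall>m\<ge>M. \<forall>n\<ge>M. dist (X (approx m \<theta>) \<omega>) (X (approx n \<theta>) \<omega>) < e" by blast
  qed
  then show ?thesis
    unfolding limit_field_def by (simp add: Cauchy_convergent_iff convergent_LIMSEQ_iff)
qed

lemma limit_field_net_points:
  assumes summable: "summable (\<lambda>m. link_max m \<omega>)" and s: "s \<in> net_points"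
  shows "limit_field s \<omega> = X s \<omega>"
proof -
  have s\<Theta>: "s \<in> \<Theta>" using s net_points_subset by blast
  have "(\<lambda>n. X (approx n s) \<omega>) \<longlonglongrightarrow> X s \<omega>"
  proof (rule LIMSEQ_I)
    fix r :: real assume "r > 0"
    obtain \<delta> where \<delta>: "\<delta> > 0"
        "\<forall>s\<in>net_points. \<forall>t\<in>net_points. d s t < \<delta> \<longrightarrow> \<bar>X s \<omega> - X t \<omega>\<bar> \<le> r / 2"
      using net_points_uniformly_continuous[OF summable, of "r / 2"] \<open>r > 0\<close> by auto
    obtain N where "\<forall>n\<ge>N. radius n < \<delta>" using eventually_radius_less[OF \<delta>(1)] by auto
    then have "\<bar>X (approx n s) \<omega> - X s \<omega>\<bar> \<le> r / 2" if "n \<ge> N" for n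
      using \<delta>(2) approx_spec[OF s\<Theta>, of n] approx_in_net_points[OF s\<Theta>] s that by force
    then show "\<exists>N. \<forall>n\<ge>N. norm (X (approx n s) \<omega> - X s \<omega>) < r" using \<open>r > 0\<close> by force
  qed
  then show ?thesis using LIMSEQ_unique[OF limit_field_LIMSEQ[OF summable s\<Theta>]] by blast
qed

lemma limit_field_bound:
  assumes summable: "summable (\<lambda>m. link_max m \<omega>)" and \<theta>: "\<theta> \<in> \<Theta>"
  shows "\<bar>limit_field \<theta> \<omega> - limit_field \<theta>0 \<omega>\<bar> \<le> chain_bound \<omega>"
proof -
  have "(\<lambda>n. \<bar>X (approx n \<theta>) \<omega> - X \<theta>0 \<omega>\<bar>) \<longlonglongrightarrow> \<bar>limit_field \<theta> \<omega> - X \<theta>0 \<omega>\<bar>"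
    by (intro tendsto_intros limit_field_LIMSEQ[OF summable \<theta>])
  then have "\<bar>limit_field \<theta> \<omega> - X \<theta>0 \<omega>\<bar> \<le> chain_bound \<omega>"
    by (rule LIMSEQ_le_const2) (use net_points_bound[OF summable approx_in_net_points[OF \<theta>]] in auto)
  moreover have "\<theta>0 \<in> net_points" using root_in_net[of 0] by (auto simp: net_points_def)
  ultimately show ?thesis using limit_field_net_points[OF summable] by simp
qed

lemma limit_field_uniformly_continuous:
  assumes summable: "summable (\<lambda>m. link_max m \<omega>)"
  shows "uniformly_continuous_wrt \<Theta> d (\<lambda>\<theta>. limit_field \<theta> \<omega>)"
  unfolding uniformly_continuous_wrt_def
proof (intro allI impI)
  fix e :: real assume "e > 0"
  obtain \<delta> where \<delta>: "\<delta> > 0"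
      "\<forall>s\<in>net_points. \<forall>t\<in>net_points. d s t < \<delta> \<longrightarrow> \<bar>X s \<omega> - X t \<omega>\<bar> \<le> e / 2"
    using net_points_uniformly_continuous[OF summable, of "e / 2"] \<open>e > 0\<close> by auto
  obtain N where N: "\<forall>n\<ge>N. radius n < \<delta> / 4" using eventually_radius_less[of "\<delta> / 4"] \<delta>(1) by auto
  have "\<bar>limit_field s \<omega> - limit_field t \<omega>\<bar> < e"
    if s: "s \<in> \<Theta>" and t: "t \<in> \<Theta>" and st: "d s t < \<delta> / 2" for s t
  proof -
    have "\<bar>X (approx n s) \<omega> - X (approx n t) \<omega>\<bar> \<le> e / 2" if "n \<ge> N" for n
      using approx_close[OF s t, of n] N that st \<delta>(2) approx_in_net_points s t by force
    then have "\<bar>limit_field s \<omega> - limit_field t \<omega>\<bar> \<le> e / 2"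
      by (intro LIMSEQ_le_const2[OF tendsto_rabs[OF tendsto_diff[OF
            limit_field_LIMSEQ[OF summable s] limit_field_LIMSEQ[OF summable t]]]]) auto
    then show ?thesis using \<open>e > 0\<close> by simp
  qed
  then show "\<exists>\<delta>>0. \<forall>s\<in>\<Theta>. \<forall>t\<in>\<Theta>. d s t < \<delta> \<longrightarrow> \<bar>limit_field s \<omega> - limit_field t \<omega>\<bar> < e"
    using \<delta>(1) by (intro exI[of _ "\<delta> / 2"]) auto
qed

lemma limit_field_measurable: "\<theta> \<in> \<Theta> \<Longrightarrow> limit_field \<theta> \<in> borel_measurable M"
  unfolding limit_field_def using X_measurable[OF approx_in] by measurable

lemma limit_field_AE_eq:
  assumes \<theta>: "\<theta> \<in> \<Theta>"
  shows "AE \<omega> in M. limit_field \<theta> \<omega> = X \<theta> \<omega>"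
proof -
  define g where "g n \<omega> = ennreal \<bar>X (approx n \<theta>) \<omega> - X \<theta> \<omega>\<bar>" for n \<omega>
  have g: "g n \<in> borel_measurable M" for n
    using X_measurable[OF approx_in[OF \<theta>, of n]] X_measurable[OF \<theta>] unfolding g_def by measurable
  \<comment> \<open>The approximation errors have summable first moments, so they tend to 0 almost surely.\<close>
  have "(\<integral>\<^sup>+\<omega>. g n \<omega> \<partial>M) \<le> ennreal (6 * C * radius n)" for n
  proof -
    have "nearly_subgaussian_rv M C (radius n) (\<lambda>\<omega>. X (approx n \<theta>) \<omega> - X \<theta> \<omega>)"
      "nearly_subgaussian_rv M C (radius n) (\<lambda>\<omega>. - (X (approx n \<theta>) \<omega> - X \<theta> \<omega>))"
      using approx_spec[OF \<theta>, of n] approx_in[OF \<theta>] \<theta> C d_nonneg d_sym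
      by (auto intro!: nearly_subgaussian_rv_mono[OF increment])
    then show ?thesis
      unfolding g_def using X_measurable[OF approx_in[OF \<theta>, of n]] X_measurable[OF \<theta>] C radius_pos[of n]
      by (intro nn_integral_abs_le_nearly_subgaussian) (auto simp: less_imp_le)
  qed
  then have "(\<integral>\<^sup>+\<omega>. (\<Sum>n. g n \<omega>) \<partial>M) \<le> (\<Sum>n. ennreal (6 * C * radius n))"
    by (simp add: nn_integral_suminf[OF g] suminf_le summableI)
  also have "\<dots> < \<infinity>"
    using summable_mult[OF summable_radius, of "6 * C"] C radius_pos
    by (simp add: suminf_ennreal2 less_imp_le mult.assoc)
  finally have "AE \<omega> in M. (\<Sum>n. g n \<omega>) \<noteq> \<infinity>"
    by (intro nn_integral_noteq_infinite) (use g in auto)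
  then show ?thesis using AE_summable_link_max
  proof eventually_elim
    case (elim \<omega>)
    have "summable (\<lambda>n. \<bar>X (approx n \<theta>) \<omega> - X \<theta> \<omega>\<bar>)"
      using elim(1) by (intro summable_suminf_not_top) (auto simp: g_def infinity_ennreal_def)
    then have "(\<lambda>n. \<bar>X (approx n \<theta>) \<omega> - X \<theta> \<omega>\<bar>) \<longlonglongrightarrow> 0" by (rule summable_LIMSEQ_zero)
    then have "(\<lambda>n. X (approx n \<theta>) \<omega>) \<longlonglongrightarrow> X \<theta> \<omega>"
      by (simp add: tendsto_rabs_zero_iff LIM_zero_iff)
    then show ?case using LIMSEQ_unique[OF limit_field_LIMSEQ[OF elim(2) \<theta>]] by blast
  qed
qed

end

section \<open>Separable versions\<close>

lemma separable_field_of_uniformly_continuous: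
  assumes "countable T" and "T \<subseteq> \<Theta>" and dense: "\<And>\<theta> e. \<theta> \<in> \<Theta> \<Longrightarrow> e > 0 \<Longrightarrow> \<exists>t\<in>T. d t \<theta> < e"
    and uc: "AE \<omega> in M. uniformly_continuous_wrt \<Theta> d (\<lambda>\<theta>. Y \<theta> \<omega>)"
  shows "separable_field M \<Theta> d Y"
proof -
  obtain N where N_sub: "{\<omega> \<in> space M. \<not> uniformly_continuous_wrt \<Theta> d (\<lambda>\<theta>. Y \<theta> \<omega>)} \<subseteq> N"
      and "emeasure M N = 0" "N \<in> sets M"
    using uc by (rule AE_E)
  then have N: "N \<in> null_sets M" by auto
  have uc_N: "uniformly_continuous_wrt \<Theta> d (\<lambda>\<theta>. Y \<theta> \<omega>)" if "\<omega> \<in> space M - N" for \<omega>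
    using N_sub that by blast
  have "Y \<theta> \<omega> \<in> closure {Y t \<omega> | t. t \<in> T \<and> d t \<theta> < \<epsilon>}"
    if \<omega>: "\<omega> \<in> space M - N" and \<theta>: "\<theta> \<in> \<Theta>" and "\<epsilon> > 0" for \<omega> \<theta> \<epsilon>
    unfolding closure_approachable
  proof (intro allI impI)
    fix r :: real assume "r > 0"
    obtain \<delta> where \<delta>: "\<delta> > 0" "\<forall>s\<in>\<Theta>. \<forall>t\<in>\<Theta>. d s t < \<delta> \<longrightarrow> \<bar>Y s \<omega> - Y t \<omega>\<bar> < r"
      using uc_N[OF \<omega>] \<open>r > 0\<close> unfolding uniformly_continuous_wrt_def by blast
    obtain t where t: "t \<in> T" "d t \<theta> < min \<epsilon> \<delta>" using dense[OF \<theta>, of "min \<epsilon> \<delta>"] \<open>\<epsilon> > 0\<close> \<delta>(1) by auto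
    then have "\<bar>Y t \<omega> - Y \<theta> \<omega>\<bar> < r" using \<delta>(2) \<open>T \<subseteq> \<Theta>\<close> \<theta> by auto
    then show "\<exists>y\<in>{Y t \<omega> | t. t \<in> T \<and> d t \<theta> < \<epsilon>}. dist y (Y \<theta> \<omega>) < r"
      using t by (auto simp: dist_real_def)
  qed
  then show ?thesis unfolding separable_field_def using assms(1,2) N by blast
qed

\<comment> \<open>Off a null set, a separable version agrees with the continuous version on the countable separant, and separability transfers this to all of \<open>\<Theta>\<close>.\<close>
lemma separable_version_AE_eq:
  assumes Y: "is_version M \<Theta> X Y" and uc: "AE \<omega> in M. uniformly_continuous_wrt \<Theta> d (\<lambda>\<theta>. Y \<theta> \<omega>)"
    and Y': "is_version M \<Theta> X Y'" and sep: "separable_field M \<Theta> d Y'"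
  shows "AE \<omega> in M. \<forall>\<theta>\<in>\<Theta>. Y' \<theta> \<omega> = Y \<theta> \<omega>"
proof -
  obtain T N where T: "countable T" "T \<subseteq> \<Theta>" and N: "N \<in> null_sets M"
    and cl: "\<forall>\<omega>\<in>space M - N. \<forall>\<theta>\<in>\<Theta>. \<forall>\<epsilon>>0. Y' \<theta> \<omega> \<in> closure {Y' t \<omega> | t. t \<in> T \<and> d t \<theta> < \<epsilon>}"
    using sep unfolding separable_field_def by blast
  have "AE \<omega> in M. \<forall>t\<in>T. Y' t \<omega> = Y t \<omega>"
  proof (subst AE_ball_countable[OF T(1)], intro ballI)
    fix t assume "t \<in> T"
    then have "AE \<omega> in M. Y' t \<omega> = X t \<omega>" "AE \<omega> in M. Y t \<omega> = X t \<omega>"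
      using Y Y' T(2) by (auto simp: is_version_def)
    then show "AE \<omega> in M. Y' t \<omega> = Y t \<omega>" by eventually_elim simp
  qed
  then show ?thesis using uc AE_not_in[OF N] AE_space
  proof eventually_elim
    case (elim \<omega>)
    show ?case
    proof
      fix \<theta> assume \<theta>: "\<theta> \<in> \<Theta>"
      have close: "\<bar>Y' \<theta> \<omega> - Y \<theta> \<omega>\<bar> \<le> 2 * r" if "r > 0" for r
      proof -
        obtain \<delta> where \<delta>: "\<delta> > 0" "\<forall>s\<in>\<Theta>. \<forall>t\<in>\<Theta>. d s t < \<delta> \<longrightarrow> \<bar>Y s \<omega> - Y t \<omega>\<bar> < r"
          using elim(2) \<open>r > 0\<close> unfolding uniformly_continuous_wrt_def by blast
        have "Y' \<theta> \<omega> \<in> closure {Y' t \<omega> | t. t \<in> T \<and> d t \<theta> < \<delta>}"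
          using cl elim(3,4) \<theta> \<delta>(1) by blast
        then obtain t where t: "t \<in> T" "d t \<theta> < \<delta>" "\<bar>Y' t \<omega> - Y' \<theta> \<omega>\<bar> < r"
          using \<open>r > 0\<close> unfolding closure_approachable by (auto simp: dist_real_def)
        then have "\<bar>Y t \<omega> - Y \<theta> \<omega>\<bar> < r" using \<delta>(2) T(2) \<theta> by auto
        then show ?thesis using t elim(1) by auto
      qed
      have "\<bar>Y' \<theta> \<omega> - Y \<theta> \<omega>\<bar> \<le> 0 + e" if "e > 0" for e
        using close[of "e / 2"] that by simp
      then have "\<bar>Y' \<theta> \<omega> - Y \<theta> \<omega>\<bar> \<le> 0" by (rule field_le_epsilon)
      then show "Y' \<theta> \<omega> = Y \<theta> \<omega>" by simp
    qed
  qed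
qed

lemma nearly_subgaussian_continuous_version:
  assumes prob: "prob_space M" and semi: "semimetric_on \<Theta> d" and tb: "totally_bounded_wrt \<Theta> d"
    and ns: "nearly_subgaussian M \<Theta> d X"
    and dudley: "dudley_integral \<Theta> d (diameter_wrt \<Theta> d) < \<infinity>"
    and \<theta>0: "\<theta>0 \<in> \<Theta>"
  shows "\<exists>Y U. is_version M \<Theta> X Y \<and> separable_field M \<Theta> d Y
    \<and> U \<in> borel_measurable M \<and> (\<forall>p>0. (\<integral>\<^sup>+\<omega>. ennreal (exp (p * U \<omega>)) \<partial>M) < \<infinity>)
    \<and> (AE \<omega> in M. uniformly_continuous_wrt \<Theta> d (\<lambda>\<theta>. Y \<theta> \<omega>)
         \<and> (\<forall>\<theta>\<in>\<Theta>. \<bar>Y \<theta> \<omega> - Y \<theta>0 \<omega>\<bar> \<le> U \<omega>))"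
proof -
  obtain C where C: "C \<ge> 1" and increment: "\<And>\<theta> \<phi>. \<theta> \<in> \<Theta> \<Longrightarrow> \<phi> \<in> \<Theta> \<Longrightarrow>
      nearly_subgaussian_rv M C (d \<theta> \<phi>) (\<lambda>\<omega>. X \<theta> \<omega> - X \<phi> \<omega>)"
    using nearly_subgaussian_increment[OF ns] by blast
  interpret dudley_chaining M \<Theta> d X C \<theta>0
    by (rule dudley_chaining.intro[OF prob semi tb nearly_subgaussian_measurable[OF ns] C
          increment dudley \<theta>0])
  have paths: "AE \<omega> in M. uniformly_continuous_wrt \<Theta> d (\<lambda>\<theta>. limit_field \<theta> \<omega>)
      \<and> (\<forall>\<theta>\<in>\<Theta>. \<bar>limit_field \<theta> \<omega> - limit_field \<theta>0 \<omega>\<bar> \<le> chain_bound \<omega>)"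
    using AE_summable_link_max
  proof eventually_elim
    case (elim \<omega>)
    then show ?case using limit_field_uniformly_continuous limit_field_bound by blast
  qed
  have "separable_field M \<Theta> d limit_field"
    by (rule separable_field_of_uniformly_continuous[OF countable_net_points net_points_subset
          dense_net_points eventually_mono[OF paths]]) auto
  moreover have "is_version M \<Theta> X limit_field"
    by (simp add: is_version_def limit_field_measurable limit_field_AE_eq)
  ultimately show ?thesis using paths chain_bound_measurable exp_moment_chain_bound by blast
qed

lemma separable_version_chain_bound:
  assumes "prob_space M" and "semimetric_on \<Theta> d" and "totally_bounded_wrt \<Theta> d"
    and "nearly_subgaussian M \<Theta> d X"
    and "dudley_integral \<Theta> d (diameter_wrt \<Theta> d) < \<infinity>"
    and \<theta>0: "\<theta>0 \<in> \<Theta>" and Y': "is_version M \<Theta> X Y'" and sep: "separable_field M \<Theta> d Y'"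
  shows "\<exists>U. U \<in> borel_measurable M \<and> (\<forall>p>0. (\<integral>\<^sup>+\<omega>. ennreal (exp (p * U \<omega>)) \<partial>M) < \<infinity>)
    \<and> (AE \<omega> in M. uniformly_continuous_wrt \<Theta> d (\<lambda>\<theta>. Y' \<theta> \<omega>)
         \<and> (\<forall>\<theta>\<in>\<Theta>. \<bar>Y' \<theta> \<omega> - Y' \<theta>0 \<omega>\<bar> \<le> U \<omega>))"
proof -
  obtain Y U where Y: "is_version M \<Theta> X Y" and U: "U \<in> borel_measurable M"
      "\<forall>p>0. (\<integral>\<^sup>+\<omega>. ennreal (exp (p * U \<omega>)) \<partial>M) < \<infinity>"
    and paths: "AE \<omega> in M. uniformly_continuous_wrt \<Theta> d (\<lambda>\<theta>. Y \<theta> \<omega>)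
         \<and> (\<forall>\<theta>\<in>\<Theta>. \<bar>Y \<theta> \<omega> - Y \<theta>0 \<omega>\<bar> \<le> U \<omega>)"
    using nearly_subgaussian_continuous_version[OF assms(1-6)] by blast
  have "AE \<omega> in M. \<forall>\<theta>\<in>\<Theta>. Y' \<theta> \<omega> = Y \<theta> \<omega>"
    using paths by (intro separable_version_AE_eq[OF Y _ Y' sep]) (auto elim: AE_mp)
  with paths have "AE \<omega> in M. uniformly_continuous_wrt \<Theta> d (\<lambda>\<theta>. Y' \<theta> \<omega>)
      \<and> (\<forall>\<theta>\<in>\<Theta>. \<bar>Y' \<theta> \<omega> - Y' \<theta>0 \<omega>\<bar> \<le> U \<omega>)"
    by eventually_elim (use \<theta>0 in \<open>auto simp: uniformly_continuous_wrt_def\<close>)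
  then show ?thesis using U by blast
qed

lemma ex_separable_version:
  assumes "prob_space M" and "semimetric_on \<Theta> d" and "totally_bounded_wrt \<Theta> d"
    and "nearly_subgaussian M \<Theta> d X"
    and "dudley_integral \<Theta> d (diameter_wrt \<Theta> d) < \<infinity>"
  shows "\<exists>Y. is_version M \<Theta> X Y \<and> separable_field M \<Theta> d Y"
proof (cases "\<Theta> = {}")
  case True
  then have "is_version M \<Theta> X X \<and> separable_field M \<Theta> d X"
    by (auto simp: is_version_def separable_field_def)
  then show ?thesis by blast
qed (use nearly_subgaussian_continuous_version[OF assms] in blast)

lemma AE_bdd_above_uniformly_continuous_separable_version:
  assumes "prob_space M" and "semimetric_on \<Theta> d" and "totally_bounded_wrt \<Theta> d"
    and "nearly_subgaussian M \<Theta> d X"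
    and "dudley_integral \<Theta> d (diameter_wrt \<Theta> d) < \<infinity>"
    and Y: "is_version M \<Theta> X Y" "separable_field M \<Theta> d Y"
  shows "AE \<omega> in M. bdd_above ((\<lambda>\<theta>. \<bar>Y \<theta> \<omega>\<bar>) ` \<Theta>) \<and> uniformly_continuous_wrt \<Theta> d (\<lambda>\<theta>. Y \<theta> \<omega>)"
proof (cases "\<Theta> = {}")
  case False
  then obtain \<theta>0 where "\<theta>0 \<in> \<Theta>" by blast
  then obtain U where "AE \<omega> in M. uniformly_continuous_wrt \<Theta> d (\<lambda>\<theta>. Y \<theta> \<omega>)
      \<and> (\<forall>\<theta>\<in>\<Theta>. \<bar>Y \<theta> \<omega> - Y \<theta>0 \<omega>\<bar> \<le> U \<omega>)"
    using separable_version_chain_bound[OF assms(1-5) _ Y] by blast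
  then show ?thesis
  proof eventually_elim
    case (elim \<omega>)
    then have "\<bar>Y \<theta> \<omega>\<bar> \<le> U \<omega> + \<bar>Y \<theta>0 \<omega>\<bar>" if "\<theta> \<in> \<Theta>" for \<theta>
      using that by force
    then have "bdd_above ((\<lambda>\<theta>. \<bar>Y \<theta> \<omega>\<bar>) ` \<Theta>)" by (rule bdd_aboveI2)
    then show ?case using elim by blast
  qed
qed (simp add: uniformly_continuous_wrt_def)

theorem propositionA2:
  fixes M :: "'a measure" and \<Theta> :: "'b set" and d :: "'b \<Rightarrow> 'b \<Rightarrow> real"
    and X :: "'b \<Rightarrow> 'a \<Rightarrow> real"
  assumes "prob_space M"
    and "semimetric_on \<Theta> d"
    and "totally_bounded_wrt \<Theta> d"
    and "nearly_subgaussian M \<Theta> d X"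
    and "dudley_integral \<Theta> d (diameter_wrt \<Theta> d) < \<infinity>"
  shows "(\<exists>Y. is_version M \<Theta> X Y \<and> separable_field M \<Theta> d Y)
    \<and> (\<forall>Y. is_version M \<Theta> X Y \<and> separable_field M \<Theta> d Y \<longrightarrow>
          (AE \<omega> in M. bdd_above ((\<lambda>\<theta>. \<bar>Y \<theta> \<omega>\<bar>) ` \<Theta>)
                      \<and> uniformly_continuous_wrt \<Theta> d (\<lambda>\<theta>. Y \<theta> \<omega>)))
    \<and> (\<forall>Y. is_version M \<Theta> X Y \<and> separable_field M \<Theta> d Y \<longrightarrow>
          (\<forall>\<theta>0\<in>\<Theta>. \<exists>U. U \<in> borel_measurable M
              \<and> (AE \<omega> in M. \<forall>\<theta>\<in>\<Theta>. Y \<theta> \<omega> \<le> U \<omega> + Y \<theta>0 \<omega>)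
              \<and> (\<forall>p>0. (\<integral>\<^sup>+ \<omega>. ennreal (exp (p * U \<omega>)) \<partial>M) < \<infinity>)))"
proof (intro conjI allI impI ballI; (elim conjE)?)
  show "\<exists>Y. is_version M \<Theta> X Y \<and> separable_field M \<Theta> d Y"
    by (rule ex_separable_version[OF assms])
next
  fix Y assume "is_version M \<Theta> X Y" "separable_field M \<Theta> d Y"
  then show "AE \<omega> in M. bdd_above ((\<lambda>\<theta>. \<bar>Y \<theta> \<omega>\<bar>) ` \<Theta>) \<and> uniformly_continuous_wrt \<Theta> d (\<lambda>\<theta>. Y \<theta> \<omega>)"
    by (rule AE_bdd_above_uniformly_continuous_separable_version[OF assms])
next
  fix Y \<theta>0 assume Y: "is_version M \<Theta> X Y" "separable_field M \<Theta> d Y" and "\<theta>0 \<in> \<Theta>"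
  then obtain U where "U \<in> borel_measurable M" "\<forall>p>0. (\<integral>\<^sup>+\<omega>. ennreal (exp (p * U \<omega>)) \<partial>M) < \<infinity>"
    and "AE \<omega> in M. \<forall>\<theta>\<in>\<Theta>. \<bar>Y \<theta> \<omega> - Y \<theta>0 \<omega>\<bar> \<le> U \<omega>"
    using separable_version_chain_bound[OF assms _ Y] by (auto elim: eventually_mono)
  moreover from this(3) have "AE \<omega> in M. \<forall>\<theta>\<in>\<Theta>. Y \<theta> \<omega> \<le> U \<omega> + Y \<theta>0 \<omega>"
    by eventually_elim force
  ultimately show "\<exists>U. U \<in> borel_measurable M \<and> (AE \<omega> in M. \<forall>\<theta>\<in>\<Theta>. Y \<theta> \<omega> \<le> U \<omega> + Y \<theta>0 \<omega>)
      \<and> (\<forall>p>0. (\<integral>\<^sup>+ \<omega>. ennreal (exp (p * U \<omega>)) \<partial>M) < \<infinity>)" by blast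
qed

end
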